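(* Let $C$ be an $n\times n$ matrix of non-negative integers, and let $0\le m\le n$. Suppose: - all entries in the first $m$ rows of $C$ are non-zero; - all entries in the last $n-m$ rows of $C$ are zero; - the first column of $C$ is $(d,\dots,d,0,\dots,0)^T$, with $m$ entries equal to $d$, where $d$ is the gcd of the non-zero entries of $C$. If $C$ has rank $1$, then $J_{nm}+C\sim_M J_{nm}+D$, where $D$ is the $n\times n$ matrix whose first $m$ rows have all entries equal to $d$ and whose last $n-m$ rows are zero.
   Context: $J_{nm}$ ($0\le m\le n$) is the $n\times n$ matrix whose $i$-th row, for $i\le m$, has a $1$ in position $i$ and $0$ elsewhere, and whose last $n-m$ rows consist entirely of $\infty$. Arithmetic convention: $\infty+a=\infty$. For an $X\times X$ matrix $A$ with entries in $\{0,1,2,\dots\}\cup\{\infty\}$, $G_A$ is the graph with vertex set $X$ and exactly $A(x,y)$ edges from $x$ to $y$. For matrices, $A\sim_M B$ means $G_A\sim_M G_B$. A graph may have multiple edges and loops. A source receives no edges, a sink emits no edges, and an infinite emitter emits infinitely many edges. A vertex is singular if it is a sink or infinite emitter, and regular otherwise. Move-equivalence $\sim_M$ is the smallest equivalence relation on graphs with finitely many vertices such that $G\sim_M E$ whenever $E$ is isomorphic to a graph obtained from $G$ by one of the following moves. (S) Delete a regular source together with the edges it emits. (R) For a regular vertex $u$ emitting exactly one edge $f$, with $r(f)\neq u$, and all of whose incoming edges have the same source $v$: delete $u$, $f$ and the edges into $u$, and add for each $e\in r^{-1}(u)$ an edge $[ef]$ from $v$ to $r(f)$. (O) Out-splitting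 at a non-sink $v$ along a partition $\mathcal E_1,\dots,\mathcal E_n$ of $s^{-1}(v)$ with at most one infinite part. Replace $v$ by $v^1,\dots,v^n$. Each edge $e$ into $v$ becomes copies $e^1,\dots,e^n$ with $r(e^i)=v^i$ and source $s(e)$, or source $v^j$ if $s(e)=v$ and $e\in\mathcal E_j$. An edge from $v$ to $w\neq v$ lying in $\mathcal E_i$ gets source $v^i$. (I) In-splitting at a regular non-source $v$ along a partition $\mathcal E_1,\dots,\mathcal E_n$ of $r^{-1}(v)$. Replace $v$ by $v^1,\dots,v^n$. Each edge $e$ out of $v$ becomes copies $e^1,\dots,e^n$ with $s(e^i)=v^i$ and range $r(e)$, or range $v^j$ if $r(e)=v$ and $e\in\mathcal E_j$. An edge into $v$ from $w\neq v$ lying in $\mathcal E_i$ gets range $v^i$. *)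

theory Defs
  imports Main "HOL-Library.Extended_Nat" "Jordan_Normal_Form.DL_Rank"
begin

record ('v, 'e) graph =
  verts :: "'v set"
  edges :: "'e set"
  src :: "'e \<Rightarrow> 'v"
  rng :: "'e \<Rightarrow> 'v"

definition wf_graph :: "('v, 'e) graph \<Rightarrow> bool" where
  "wf_graph G \<longleftrightarrow> finite (verts G) \<and>
     (\<forall>e \<in> edges G. src G e \<in> verts G \<and> rng G e \<in> verts G)"

definition graph_iso :: "('v1, 'e1) graph \<Rightarrow> ('v2, 'e2) graph \<Rightarrow> bool" where
  "graph_iso G H \<longleftrightarrow> (\<exists>\<phi> \<psi>. bij_betw \<phi> (verts G) (verts H) \<and> bij_betw \<psi> (edges G) (edges H) \<and>
     (\<forall>e \<in> edges G. src H (\<psi> e) = \<phi> (src G e) \<and> rng H (\<psi> e) = \<phi> (rng G e)))"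

definition out_edges :: "('v, 'e) graph \<Rightarrow> 'v \<Rightarrow> 'e set" where
  "out_edges G v = {e \<in> edges G. src G e = v}"

definition in_edges :: "('v, 'e) graph \<Rightarrow> 'v \<Rightarrow> 'e set" where
  "in_edges G v = {e \<in> edges G. rng G e = v}"

definition is_source :: "('v, 'e) graph \<Rightarrow> 'v \<Rightarrow> bool" where
  "is_source G v \<longleftrightarrow> in_edges G v = {}"

definition is_sink :: "('v, 'e) graph \<Rightarrow> 'v \<Rightarrow> bool" where
  "is_sink G v \<longleftrightarrow> out_edges G v = {}"

definition is_inf_emitter :: "('v, 'e) graph \<Rightarrow> 'v \<Rightarrow> bool" where
  "is_inf_emitter G v \<longleftrightarrow> infinite (out_edges G v)"

definition is_regular :: "('v, 'e) graph \<Rightarrow> 'v \<Rightarrow> bool" where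
  "is_regular G v \<longleftrightarrow> v \<in> verts G \<and> \<not> is_sink G v \<and> \<not> is_inf_emitter G v"

definition move_S_cond :: "('v, 'e) graph \<Rightarrow> 'v \<Rightarrow> bool" where
  "move_S_cond G v \<longleftrightarrow> is_regular G v \<and> is_source G v"

definition move_S :: "('v, 'e) graph \<Rightarrow> 'v \<Rightarrow> ('v, 'e) graph" where
  "move_S G v = \<lparr>verts = verts G - {v}, edges = {e \<in> edges G. src G e \<noteq> v},
                 src = src G, rng = rng G\<rparr>"

text \<open>(R) reduction at u with unique out-edge f; Inl e = old edge, Inr e = new edge [ef]\<close>
definition move_R_cond :: "('v, 'e) graph \<Rightarrow> 'v \<Rightarrow> 'e \<Rightarrow> 'v \<Rightarrow> bool" where
  "move_R_cond G u f v \<longleftrightarrow> u \<in> verts G \<and> is_regular G u \<and> out_edges G u = {f} \<and>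
     rng G f \<noteq> u \<and> src G ` in_edges G u = {v}"

definition move_R :: "('v, 'e) graph \<Rightarrow> 'v \<Rightarrow> 'e \<Rightarrow> ('v, 'e + 'e) graph" where
  "move_R G u f = \<lparr>verts = verts G - {u},
     edges = Inl ` (edges G - in_edges G u - {f}) \<union> Inr ` in_edges G u,
     src = (\<lambda>x. case x of Inl e \<Rightarrow> src G e | Inr e \<Rightarrow> src G e),
     rng = (\<lambda>x. case x of Inl e \<Rightarrow> rng G e | Inr e \<Rightarrow> rng G f)\<rparr>"

text \<open>(O) out-splitting at v along the partition of out_edges G v into the
  nonempty classes {e. p e = i}, i < k; vertex (v,i) is v^(i+1), (w,0) is w \<noteq> v.\<close>
definition move_O_cond :: "('v, 'e) graph \<Rightarrow> 'v \<Rightarrow> nat \<Rightarrow> ('e \<Rightarrow> nat) \<Rightarrow> bool" where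
  "move_O_cond G v k p \<longleftrightarrow> v \<in> verts G \<and> \<not> is_sink G v \<and> 1 \<le> k \<and>
     p ` out_edges G v = {0..<k} \<and>
     (\<forall>i<k. \<forall>j<k. infinite {e \<in> out_edges G v. p e = i} \<and>
                  infinite {e \<in> out_edges G v. p e = j} \<longrightarrow> i = j)"

definition move_O :: "('v, 'e) graph \<Rightarrow> 'v \<Rightarrow> nat \<Rightarrow> ('e \<Rightarrow> nat) \<Rightarrow> ('v \<times> nat, 'e \<times> nat) graph" where
  "move_O G v k p = \<lparr>
     verts = {(w, 0) | w. w \<in> verts G \<and> w \<noteq> v} \<union> {(v, i) | i. i < k},
     edges = {(e, 0) | e. e \<in> edges G \<and> rng G e \<noteq> v} \<union>
             {(e, i) | e i. e \<in> edges G \<and> rng G e = v \<and> i < k},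
     src = (\<lambda>(e, i). if src G e = v then (v, p e) else (src G e, 0)),
     rng = (\<lambda>(e, i). if rng G e = v then (v, i) else (rng G e, 0))\<rparr>"

definition move_I_cond :: "('v, 'e) graph \<Rightarrow> 'v \<Rightarrow> nat \<Rightarrow> ('e \<Rightarrow> nat) \<Rightarrow> bool" where
  "move_I_cond G v k q \<longleftrightarrow> is_regular G v \<and> \<not> is_source G v \<and> 1 \<le> k \<and>
     q ` in_edges G v = {0..<k}"

definition move_I :: "('v, 'e) graph \<Rightarrow> 'v \<Rightarrow> nat \<Rightarrow> ('e \<Rightarrow> nat) \<Rightarrow> ('v \<times> nat, 'e \<times> nat) graph" where
  "move_I G v k q = \<lparr>
     verts = {(w, 0) | w. w \<in> verts G \<and> w \<noteq> v} \<union> {(v, i) | i. i < k},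
     edges = {(e, 0) | e. e \<in> edges G \<and> src G e \<noteq> v} \<union>
             {(e, i) | e i. e \<in> edges G \<and> src G e = v \<and> i < k},
     src = (\<lambda>(e, i). if src G e = v then (v, i) else (src G e, 0)),
     rng = (\<lambda>(e, i). if rng G e = v then (v, q e) else (rng G e, 0))\<rparr>"

text \<open>Graphs are represented on the countable universe nat; all graphs in the
  equivalence class of a countable graph are countable.\<close>
type_synonym ngraph = "(nat, nat) graph"

definition one_move :: "ngraph \<Rightarrow> ngraph \<Rightarrow> bool" where
  "one_move G H \<longleftrightarrow> wf_graph G \<and>
     ((\<exists>v. move_S_cond G v \<and> graph_iso (move_S G v) H) \<or>
      (\<exists>u f v. move_R_cond G u f v \<and> graph_iso (move_R G u f) H) \<or>
      (\<exists>v k p. move_O_cond G v k p \<and> graph_iso (move_O G v k p) H) \<or>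
      (\<exists>v k q. move_I_cond G v k q \<and> graph_iso (move_I G v k q) H))"

definition move_equiv_nat :: "ngraph \<Rightarrow> ngraph \<Rightarrow> bool" where
  "move_equiv_nat = (sup one_move one_move\<inverse>\<inverse>)\<^sup>*\<^sup>*"

definition move_equiv :: "('v1, 'e1) graph \<Rightarrow> ('v2, 'e2) graph \<Rightarrow> bool" where
  "move_equiv G H \<longleftrightarrow> (\<exists>G' H' :: ngraph. graph_iso G G' \<and> graph_iso H H' \<and> move_equiv_nat G' H')"

definition graph_of_mat :: "nat \<Rightarrow> (nat \<Rightarrow> nat \<Rightarrow> enat) \<Rightarrow> (nat, nat \<times> nat \<times> nat) graph" where
  "graph_of_mat n A = \<lparr>verts = {0..<n},
     edges = {(x, y, k). x < n \<and> y < n \<and> enat k < A x y},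
     src = (\<lambda>(x, y, k). x), rng = (\<lambda>(x, y, k). y)\<rparr>"

definition mat_move_equiv :: "nat \<Rightarrow> (nat \<Rightarrow> nat \<Rightarrow> enat) \<Rightarrow> (nat \<Rightarrow> nat \<Rightarrow> enat) \<Rightarrow> bool" where
  "mat_move_equiv n A B \<longleftrightarrow> move_equiv (graph_of_mat n A) (graph_of_mat n B)"

definition J_mat :: "nat \<Rightarrow> nat \<Rightarrow> nat \<Rightarrow> nat \<Rightarrow> enat" where
  "J_mat n m i j = (if i < m then (if i = j then 1 else 0) else \<infinity>)"

definition D_mat :: "nat \<Rightarrow> nat \<Rightarrow> nat \<Rightarrow> nat \<Rightarrow> nat \<Rightarrow> nat" where
  "D_mat n m d i j = (if i < m then d else 0)"

definition mat_plus :: "(nat \<Rightarrow> nat \<Rightarrow> enat) \<Rightarrow> (nat \<Rightarrow> nat \<Rightarrow> nat) \<Rightarrow> nat \<Rightarrow> nat \<Rightarrow> enat" where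
  "mat_plus A C i j = A i j + enat (C i j)"

definition real_mat_of :: "nat \<Rightarrow> (nat \<Rightarrow> nat \<Rightarrow> nat) \<Rightarrow> real mat" where
  "real_mat_of n C = mat n n (\<lambda>(i, j). real (C i j))"

end

theory Submission
  imports Defs "HOL-Library.Countable_Set"
begin

text \<open>Since the first column of \<open>C\<close> is \<open>(d, \<dots>, d, 0, \<dots>, 0)\<close> and \<open>C\<close> has rank one, the first \<open>m\<close>
  rows of \<open>C\<close> are equal, say to \<open>c\<close>. In the graph, a vertex \<open>u\<close> with a loop and an edge to \<open>v\<close>
  can be out-split so that one copy keeps only a single edge to \<open>v\<close>; contracting that edge adds
  column \<open>u\<close> to column \<open>v\<close> and removes one edge from \<open>u\<close> to \<open>v\<close>. For \<open>u = 0\<close> this raises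
  column \<open>j\<close> of \<open>J\<^sub>n\<^sub>m + C\<close> by \<open>d\<close> in each of the first \<open>m\<close> rows and leaves the infinite rows
  alone. Read backwards, and since \<open>d\<close> divides every \<open>c\<^sub>j\<close>, all columns can be lowered to \<open>d\<close>.
  Contracting an edge out of a vertex whose incoming edges come from several vertices is
  reduced to move (R) by in-splitting off one of these vertices at a time.\<close>

section \<open>Graph isomorphisms\<close>

definition graph_iso_by :: "('v1 \<Rightarrow> 'v2) \<Rightarrow> ('e1 \<Rightarrow> 'e2) \<Rightarrow> ('v1, 'e1) graph \<Rightarrow> ('v2, 'e2) graph \<Rightarrow> bool" where
  "graph_iso_by \<phi> \<psi> G H \<longleftrightarrow> bij_betw \<phi> (verts G) (verts H) \<and> bij_betw \<psi> (edges G) (edges H) \<and>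
     (\<forall>e \<in> edges G. src H (\<psi> e) = \<phi> (src G e) \<and> rng H (\<psi> e) = \<phi> (rng G e))"

lemma graph_iso_iff_graph_iso_by: "graph_iso G H \<longleftrightarrow> (\<exists>\<phi> \<psi>. graph_iso_by \<phi> \<psi> G H)"
  unfolding graph_iso_def graph_iso_by_def by blast

lemma graph_iso_byD:
  assumes "graph_iso_by \<phi> \<psi> G H"
  shows "inj_on \<phi> (verts G)" "\<phi> ` verts G = verts H" "inj_on \<psi> (edges G)" "\<psi> ` edges G = edges H"
    "\<And>e. e \<in> edges G \<Longrightarrow> src H (\<psi> e) = \<phi> (src G e)"
    "\<And>e. e \<in> edges G \<Longrightarrow> rng H (\<psi> e) = \<phi> (rng G e)"
  using assms unfolding graph_iso_by_def bij_betw_def by auto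

lemma wf_graphD:
  "wf_graph G \<Longrightarrow> e \<in> edges G \<Longrightarrow> src G e \<in> verts G"
  "wf_graph G \<Longrightarrow> e \<in> edges G \<Longrightarrow> rng G e \<in> verts G"
  unfolding wf_graph_def by auto

lemma graph_iso_by_comp:
  assumes "graph_iso_by \<phi> \<psi> G H" "graph_iso_by \<phi>' \<psi>' H K"
  shows "graph_iso_by (\<phi>' \<circ> \<phi>) (\<psi>' \<circ> \<psi>) G K"
proof -
  have "\<psi> e \<in> edges H" if "e \<in> edges G" for e
    using graph_iso_byD(4)[OF assms(1)] that by blast
  then show ?thesis using assms unfolding graph_iso_by_def by (auto intro: bij_betw_trans)
qed

lemma graph_iso_by_inv:
  assumes iso: "graph_iso_by \<phi> \<psi> G H" and wf: "wf_graph G"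
  shows "graph_iso_by (inv_into (verts G) \<phi>) (inv_into (edges G) \<psi>) H G"
  unfolding graph_iso_by_def
proof (intro conjI ballI)
  have bv: "bij_betw \<phi> (verts G) (verts H)" and be: "bij_betw \<psi> (edges G) (edges H)"
    using iso unfolding graph_iso_by_def by auto
  then show "bij_betw (inv_into (verts G) \<phi>) (verts H) (verts G)"
    and "bij_betw (inv_into (edges G) \<psi>) (edges H) (edges G)"
    by (auto intro: bij_betw_inv_into)
  fix e' assume "e' \<in> edges H"
  then obtain e where e: "e \<in> edges G" "e' = \<psi> e"
    using graph_iso_byD(4)[OF iso] by blast
  then have inv_e: "inv_into (edges G) \<psi> e' = e"
    using graph_iso_byD(3)[OF iso] by (simp add: inv_into_f_f)
  show "src G (inv_into (edges G) \<psi> e') = inv_into (verts G) \<phi> (src H e')"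
    and "rng G (inv_into (edges G) \<psi> e') = inv_into (verts G) \<phi> (rng H e')"
    using inv_e graph_iso_byD(1,5,6)[OF iso] e wf_graphD[OF wf e(1)] by (simp_all add: inv_into_f_f)
qed

lemma graph_iso_trans: "graph_iso G H \<Longrightarrow> graph_iso H K \<Longrightarrow> graph_iso G K"
  unfolding graph_iso_iff_graph_iso_by by (blast intro: graph_iso_by_comp)

lemma graph_iso_sym: "graph_iso G H \<Longrightarrow> wf_graph G \<Longrightarrow> graph_iso H G"
  unfolding graph_iso_iff_graph_iso_by by (blast intro: graph_iso_by_inv)

lemma wf_graph_iso_by: "graph_iso_by \<phi> \<psi> G H \<Longrightarrow> wf_graph G \<Longrightarrow> wf_graph H"
  unfolding graph_iso_by_def wf_graph_def bij_betw_def by (metis finite_imageI imageI image_iff)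

lemma out_edges_subset: "out_edges G v \<subseteq> edges G"
  unfolding out_edges_def by auto

lemma in_edges_subset: "in_edges G v \<subseteq> edges G"
  unfolding in_edges_def by auto

lemma out_edges_graph_iso_by:
  assumes iso: "graph_iso_by \<phi> \<psi> G H" and wf: "wf_graph G" and v: "v \<in> verts G"
  shows "out_edges H (\<phi> v) = \<psi> ` out_edges G v"
proof (intro equalityI subsetI)
  fix e' assume "e' \<in> out_edges H (\<phi> v)"
  then have e': "e' \<in> edges H" "src H e' = \<phi> v" unfolding out_edges_def by auto
  then obtain e where e: "e \<in> edges G" "e' = \<psi> e" using graph_iso_byD(4)[OF iso] by blast
  have "\<phi> (src G e) = \<phi> v" using e e' graph_iso_byD(5)[OF iso] by simp
  then have "src G e = v" using inj_onD[OF graph_iso_byD(1)[OF iso]] wf_graphD(1)[OF wf e(1)] v by blast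
  then show "e' \<in> \<psi> ` out_edges G v" using e unfolding out_edges_def by auto
next
  fix e' assume "e' \<in> \<psi> ` out_edges G v"
  then show "e' \<in> out_edges H (\<phi> v)" using graph_iso_byD(4,5)[OF iso] unfolding out_edges_def by auto
qed

lemma in_edges_graph_iso_by:
  assumes iso: "graph_iso_by \<phi> \<psi> G H" and wf: "wf_graph G" and v: "v \<in> verts G"
  shows "in_edges H (\<phi> v) = \<psi> ` in_edges G v"
proof (intro equalityI subsetI)
  fix e' assume "e' \<in> in_edges H (\<phi> v)"
  then have e': "e' \<in> edges H" "rng H e' = \<phi> v" unfolding in_edges_def by auto
  then obtain e where e: "e \<in> edges G" "e' = \<psi> e" using graph_iso_byD(4)[OF iso] by blast
  have "\<phi> (rng G e) = \<phi> v" using e e' graph_iso_byD(6)[OF iso] by simp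
  then have "rng G e = v" using inj_onD[OF graph_iso_byD(1)[OF iso]] wf_graphD(2)[OF wf e(1)] v by blast
  then show "e' \<in> \<psi> ` in_edges G v" using e unfolding in_edges_def by auto
next
  fix e' assume "e' \<in> \<psi> ` in_edges G v"
  then show "e' \<in> in_edges H (\<phi> v)" using graph_iso_byD(4,6)[OF iso] unfolding in_edges_def by auto
qed

lemma vertex_kinds_graph_iso_by:
  assumes iso: "graph_iso_by \<phi> \<psi> G H" and wf: "wf_graph G" and v: "v \<in> verts G"
  shows "is_regular H (\<phi> v) \<longleftrightarrow> is_regular G v"
    and "is_sink H (\<phi> v) \<longleftrightarrow> is_sink G v"
    and "is_source H (\<phi> v) \<longleftrightarrow> is_source G v"
proof -
  have inj: "inj_on \<psi> (out_edges G v)"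
    using graph_iso_byD(3)[OF iso] out_edges_subset by (rule inj_on_subset)
  have "\<phi> v \<in> verts H" using graph_iso_byD(2)[OF iso] v by blast
  then show "is_regular H (\<phi> v) \<longleftrightarrow> is_regular G v"
    unfolding is_regular_def is_sink_def is_inf_emitter_def out_edges_graph_iso_by[OF assms]
    using finite_image_iff[OF inj] v by auto
  show "is_sink H (\<phi> v) \<longleftrightarrow> is_sink G v"
    unfolding is_sink_def out_edges_graph_iso_by[OF assms] by auto
  show "is_source H (\<phi> v) \<longleftrightarrow> is_source G v"
    unfolding is_source_def in_edges_graph_iso_by[OF assms] by auto
qed

lemma srcs_in_edges_graph_iso_by:
  assumes iso: "graph_iso_by \<phi> \<psi> G H" and wf: "wf_graph G" and v: "v \<in> verts G"
  shows "src H ` in_edges H (\<phi> v) = \<phi> ` src G ` in_edges G v"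
proof -
  have "src H ` in_edges H (\<phi> v) = (\<lambda>e. src H (\<psi> e)) ` in_edges G v"
    unfolding in_edges_graph_iso_by[OF assms] image_image ..
  also have "\<dots> = (\<lambda>e. \<phi> (src G e)) ` in_edges G v"
    by (rule image_cong) (auto simp: in_edges_def graph_iso_byD(5)[OF iso])
  finally show ?thesis by (simp add: image_image)
qed

lemma card_srcs_in_edges_graph_iso_by:
  assumes iso: "graph_iso_by \<phi> \<psi> G H" and wf: "wf_graph G" and v: "v \<in> verts G"
  shows "card (src H ` in_edges H (\<phi> v)) = card (src G ` in_edges G v)"
proof -
  have "src G ` in_edges G v \<subseteq> verts G"
    using wf_graphD(1)[OF wf] unfolding in_edges_def by blast
  then have "inj_on \<phi> (src G ` in_edges G v)"
    using graph_iso_byD(1)[OF iso] by (rule inj_on_subset[rotated])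
  then show ?thesis
    unfolding srcs_in_edges_graph_iso_by[OF assms] by (rule card_image)
qed

definition nat_graph :: "('v::countable, 'e::countable) graph \<Rightarrow> ngraph" where
  "nat_graph G = \<lparr>verts = to_nat ` verts G, edges = to_nat ` edges G,
     src = (\<lambda>x. to_nat (src G (from_nat x))), rng = (\<lambda>x. to_nat (rng G (from_nat x)))\<rparr>"

lemma graph_iso_by_nat_graph: "graph_iso_by to_nat to_nat G (nat_graph G)"
  unfolding graph_iso_by_def nat_graph_def by (auto simp: bij_betw_def inj_on_def)

lemma graph_iso_nat_graph: "graph_iso G (nat_graph G)"
  using graph_iso_by_nat_graph graph_iso_iff_graph_iso_by by blast

lemma wf_nat_graph: "wf_graph G \<Longrightarrow> wf_graph (nat_graph G)"
  by (rule wf_graph_iso_by[OF graph_iso_by_nat_graph])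

section \<open>The moves are invariant under isomorphism\<close>

lemma verts_minus_graph_iso_by:
  assumes iso: "graph_iso_by \<phi> \<psi> G H" and v: "v \<in> verts G"
  shows "\<phi> ` (verts G - {v}) = verts H - {\<phi> v}"
  using graph_iso_byD(1,2)[OF iso] v by (simp add: inj_on_image_set_diff)

lemma move_S_graph_iso_by:
  assumes iso: "graph_iso_by \<phi> \<psi> G H" and wf: "wf_graph G" and c: "move_S_cond G v"
  shows "move_S_cond H (\<phi> v)" and "graph_iso_by \<phi> \<psi> (move_S G v) (move_S H (\<phi> v))"
proof -
  note P = graph_iso_byD[OF iso]
  have v: "v \<in> verts G" using c unfolding move_S_cond_def is_regular_def by auto
  show "move_S_cond H (\<phi> v)"
    using c vertex_kinds_graph_iso_by[OF iso wf v] unfolding move_S_cond_def by auto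
  have src_v: "\<phi> (src G e) = \<phi> v \<longleftrightarrow> src G e = v" if "e \<in> edges G" for e
    using inj_on_eq_iff[OF P(1) wf_graphD(1)[OF wf that] v] .
  have E: "\<psi> ` {e \<in> edges G. src G e \<noteq> v} = {e \<in> edges H. src H e \<noteq> \<phi> v}"
  proof (intro equalityI subsetI)
    fix x assume "x \<in> \<psi> ` {e \<in> edges G. src G e \<noteq> v}"
    then show "x \<in> {e \<in> edges H. src H e \<noteq> \<phi> v}" using P(4,5) src_v by auto
  next
    fix x assume x: "x \<in> {e \<in> edges H. src H e \<noteq> \<phi> v}"
    then obtain e where "e \<in> edges G" "x = \<psi> e" using P(4) by auto
    then show "x \<in> \<psi> ` {e \<in> edges G. src G e \<noteq> v}" using x P(5) src_v by auto
  qed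
  show "graph_iso_by \<phi> \<psi> (move_S G v) (move_S H (\<phi> v))"
    unfolding graph_iso_by_def move_S_def graph.simps bij_betw_def
      E[symmetric] verts_minus_graph_iso_by[OF iso v, symmetric]
    using inj_on_subset[OF P(1)] inj_on_subset[OF P(3)] P(5,6) by auto
qed

lemma inj_on_map_sum_Inl_Inr:
  assumes "inj_on \<psi> E" "A \<subseteq> E" "B \<subseteq> E"
  shows "inj_on (map_sum \<psi> \<psi>) (Inl ` A \<union> Inr ` B)"
  using assms by (auto simp: inj_on_def subset_iff)

lemma move_R_graph_iso_by:
  assumes iso: "graph_iso_by \<phi> \<psi> G H" and wf: "wf_graph G" and c: "move_R_cond G u f v"
  shows "move_R_cond H (\<phi> u) (\<psi> f) (\<phi> v)"
    and "graph_iso_by \<phi> (map_sum \<psi> \<psi>) (move_R G u f) (move_R H (\<phi> u) (\<psi> f))"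
proof -
  note P = graph_iso_byD[OF iso]
  have u: "u \<in> verts G" and reg: "is_regular G u" and out: "out_edges G u = {f}"
    and loopfree: "rng G f \<noteq> u" and srcs: "src G ` in_edges G u = {v}"
    using c unfolding move_R_cond_def by auto
  have f: "f \<in> edges G" using out_edges_subset[of G u] unfolding out by simp
  have "rng H (\<psi> f) \<noteq> \<phi> u"
    using P(6)[OF f] inj_on_eq_iff[OF P(1) wf_graphD(2)[OF wf f] u] loopfree by simp
  then show "move_R_cond H (\<phi> u) (\<psi> f) (\<phi> v)"
    unfolding move_R_cond_def
    using vertex_kinds_graph_iso_by(1)[OF iso wf u] reg out srcs P(2) u
      out_edges_graph_iso_by[OF iso wf u] srcs_in_edges_graph_iso_by[OF iso wf u] by auto
  have inE: "in_edges G u \<subseteq> edges G" by (rule in_edges_subset)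
  have img_kept: "\<psi> ` (edges G - in_edges G u - {f}) = edges H - in_edges H (\<phi> u) - {\<psi> f}"
    unfolding in_edges_graph_iso_by[OF iso wf u] P(4)[symmetric] Diff_insert[symmetric]
    using inE f by (simp add: inj_on_image_set_diff[OF P(3)] image_Un)
  have img_in: "\<psi> ` in_edges G u = in_edges H (\<phi> u)"
    using in_edges_graph_iso_by[OF iso wf u] by simp
  have E: "map_sum \<psi> \<psi> ` edges (move_R G u f) = edges (move_R H (\<phi> u) (\<psi> f))"
    unfolding move_R_def graph.simps image_Un image_image
    unfolding img_kept[symmetric] unfolding img_in[symmetric] by (simp add: image_image)
  have inj: "inj_on (map_sum \<psi> \<psi>) (edges (move_R G u f))"
    unfolding move_R_def graph.simps by (rule inj_on_map_sum_Inl_Inr[OF P(3)]) (use inE in auto)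
  have incident: "src (move_R H (\<phi> u) (\<psi> f)) (map_sum \<psi> \<psi> x) = \<phi> (src (move_R G u f) x)
      \<and> rng (move_R H (\<phi> u) (\<psi> f)) (map_sum \<psi> \<psi> x) = \<phi> (rng (move_R G u f) x)"
    if "x \<in> edges (move_R G u f)" for x
    using that inE f unfolding move_R_def by (auto simp: P(5,6))
  show "graph_iso_by \<phi> (map_sum \<psi> \<psi>) (move_R G u f) (move_R H (\<phi> u) (\<psi> f))"
    unfolding graph_iso_by_def bij_betw_def
    using E inj incident inj_on_subset[OF P(1)] verts_minus_graph_iso_by[OF iso u]
    by (auto simp: move_R_def)
qed

definition split_copies :: "'a set \<Rightarrow> 'a set \<Rightarrow> nat \<Rightarrow> ('a \<times> nat) set" where
  "split_copies A X k = (\<lambda>a. (a, 0)) ` (A - X) \<union> X \<times> {..<k}"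

lemma verts_move_O: "verts (move_O G v k p) = split_copies (verts G) {v} k"
  unfolding move_O_def split_copies_def by auto

lemma edges_move_O: "edges (move_O G v k p) = split_copies (edges G) (in_edges G v) k"
  unfolding move_O_def split_copies_def in_edges_def by auto

lemma verts_move_I: "verts (move_I G v k q) = split_copies (verts G) {v} k"
  unfolding move_I_def split_copies_def by auto

lemma edges_move_I: "edges (move_I G v k q) = split_copies (edges G) (out_edges G v) k"
  unfolding move_I_def split_copies_def out_edges_def by auto

lemma split_copies_1: "X \<subseteq> A \<Longrightarrow> split_copies A X 1 = A \<times> {0}"
  unfolding split_copies_def by auto

lemma split_copies_2: "x \<in> A \<Longrightarrow> split_copies A {x} 2 = (\<lambda>a. (a, 0)) ` A \<union> {(x, 1)}"
  unfolding split_copies_def by (auto simp: less_2_cases_iff)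

lemma bij_betw_split_copies:
  assumes "inj_on f A" "X \<subseteq> A"
  shows "bij_betw (map_prod f id) (split_copies A X k) (split_copies (f ` A) (f ` X) k)"
proof -
  have "inj_on (map_prod f id) (A \<times> UNIV)" by (rule map_prod_inj_on[OF assms(1)]) simp
  then have "inj_on (map_prod f id) (split_copies A X k)"
    by (rule inj_on_subset) (use assms(2) in \<open>auto simp: split_copies_def\<close>)
  moreover have diff: "f ` (A - X) = f ` A - f ` X"
    using inj_on_image_set_diff[OF assms(1) _ assms(2)] by simp
  have copies: "map_prod f id ` (X \<times> {..<k}) = f ` X \<times> {..<k}"
    by (simp add: map_prod_surj_on)
  have "map_prod f id ` split_copies A X k = split_copies (f ` A) (f ` X) k"
    unfolding split_copies_def image_Un copies diff[symmetric] by (simp add: image_image)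
  ultimately show ?thesis unfolding bij_betw_def ..
qed

lemma move_O_graph_iso_by:
  assumes iso: "graph_iso_by \<phi> \<psi> G H" and wf: "wf_graph G" and c: "move_O_cond G v k p"
  defines "p' \<equiv> p \<circ> inv_into (edges G) \<psi>"
  shows "move_O_cond H (\<phi> v) k p'"
    and "graph_iso_by (map_prod \<phi> id) (map_prod \<psi> id) (move_O G v k p) (move_O H (\<phi> v) k p')"
proof -
  note P = graph_iso_byD[OF iso]
  have v: "v \<in> verts G" and ns: "\<not> is_sink G v" and k: "1 \<le> k" and img: "p ` out_edges G v = {0..<k}"
    and inf: "\<forall>i<k. \<forall>j<k. infinite {e \<in> out_edges G v. p e = i} \<and>
                  infinite {e \<in> out_edges G v. p e = j} \<longrightarrow> i = j"
    using c unfolding move_O_cond_def by auto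
  have p': "p' (\<psi> e) = p e" if "e \<in> edges G" for e
    unfolding p'_def using P(3) that by (simp add: inv_into_f_f)
  have oE: "out_edges G v \<subseteq> edges G" by (rule out_edges_subset)
  have part: "{e \<in> out_edges H (\<phi> v). p' e = i} = \<psi> ` {e \<in> out_edges G v. p e = i}" for i
    unfolding out_edges_graph_iso_by[OF iso wf v] using p' oE by auto
  have "p' ` out_edges H (\<phi> v) = p ` out_edges G v"
    unfolding out_edges_graph_iso_by[OF iso wf v] image_image using p' oE by (intro image_cong) auto
  moreover have "inj_on \<psi> {e \<in> out_edges G v. p e = i}" for i
    by (rule inj_on_subset[OF P(3)]) (use oE in auto)
  then have "\<forall>i<k. \<forall>j<k. infinite {e \<in> out_edges H (\<phi> v). p' e = i} \<and>
                  infinite {e \<in> out_edges H (\<phi> v). p' e = j} \<longrightarrow> i = j"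
    unfolding part using inf finite_image_iff by blast
  ultimately show "move_O_cond H (\<phi> v) k p'"
    unfolding move_O_cond_def using vertex_kinds_graph_iso_by(2)[OF iso wf v] ns k img P(2) v by auto
  have src_v: "\<phi> (src G e) = \<phi> v \<longleftrightarrow> src G e = v" and rng_v: "\<phi> (rng G e) = \<phi> v \<longleftrightarrow> rng G e = v"
    if "e \<in> edges G" for e
    using inj_on_eq_iff[OF P(1) wf_graphD(1)[OF wf that] v]
      inj_on_eq_iff[OF P(1) wf_graphD(2)[OF wf that] v] by auto
  show "graph_iso_by (map_prod \<phi> id) (map_prod \<psi> id) (move_O G v k p) (move_O H (\<phi> v) k p')"
    unfolding graph_iso_by_def verts_move_O edges_move_O
  proof (intro conjI ballI)
    show "bij_betw (map_prod \<phi> id) (split_copies (verts G) {v} k) (split_copies (verts H) {\<phi> v} k)"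
      using bij_betw_split_copies[OF P(1), of "{v}"] v P(2) by simp
    show "bij_betw (map_prod \<psi> id) (split_copies (edges G) (in_edges G v) k)
        (split_copies (edges H) (in_edges H (\<phi> v)) k)"
      using bij_betw_split_copies[OF P(3) in_edges_subset] P(4) in_edges_graph_iso_by[OF iso wf v] by simp
    fix x assume "x \<in> split_copies (edges G) (in_edges G v) k"
    then obtain e i where x: "x = (e, i)" "e \<in> edges G"
      unfolding split_copies_def in_edges_def by auto
    show "src (move_O H (\<phi> v) k p') (map_prod \<psi> id x) = map_prod \<phi> id (src (move_O G v k p) x)"
      and "rng (move_O H (\<phi> v) k p') (map_prod \<psi> id x) = map_prod \<phi> id (rng (move_O G v k p) x)"
      unfolding move_O_def x using P(5,6)[OF x(2)] src_v[OF x(2)] rng_v[OF x(2)] p'[OF x(2)] by simp_all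
  qed
qed

lemma move_I_graph_iso_by:
  assumes iso: "graph_iso_by \<phi> \<psi> G H" and wf: "wf_graph G" and c: "move_I_cond G v k q"
  defines "q' \<equiv> q \<circ> inv_into (edges G) \<psi>"
  shows "move_I_cond H (\<phi> v) k q'"
    and "graph_iso_by (map_prod \<phi> id) (map_prod \<psi> id) (move_I G v k q) (move_I H (\<phi> v) k q')"
proof -
  note P = graph_iso_byD[OF iso]
  have reg: "is_regular G v" and ns: "\<not> is_source G v" and k: "1 \<le> k"
    and img: "q ` in_edges G v = {0..<k}"
    using c unfolding move_I_cond_def by auto
  have v: "v \<in> verts G" using reg unfolding is_regular_def by simp
  have q': "q' (\<psi> e) = q e" if "e \<in> edges G" for e
    unfolding q'_def using P(3) that by (simp add: inv_into_f_f)
  have "q' ` in_edges H (\<phi> v) = q ` in_edges G v"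
    unfolding in_edges_graph_iso_by[OF iso wf v] image_image
    using q' by (intro image_cong) (auto simp: in_edges_def)
  then show "move_I_cond H (\<phi> v) k q'"
    unfolding move_I_cond_def using vertex_kinds_graph_iso_by(1,3)[OF iso wf v] reg ns k img by simp
  have src_v: "\<phi> (src G e) = \<phi> v \<longleftrightarrow> src G e = v" and rng_v: "\<phi> (rng G e) = \<phi> v \<longleftrightarrow> rng G e = v"
    if "e \<in> edges G" for e
    using inj_on_eq_iff[OF P(1) wf_graphD(1)[OF wf that] v]
      inj_on_eq_iff[OF P(1) wf_graphD(2)[OF wf that] v] by auto
  show "graph_iso_by (map_prod \<phi> id) (map_prod \<psi> id) (move_I G v k q) (move_I H (\<phi> v) k q')"
    unfolding graph_iso_by_def verts_move_I edges_move_I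
  proof (intro conjI ballI)
    show "bij_betw (map_prod \<phi> id) (split_copies (verts G) {v} k) (split_copies (verts H) {\<phi> v} k)"
      using bij_betw_split_copies[OF P(1), of "{v}"] v P(2) by simp
    show "bij_betw (map_prod \<psi> id) (split_copies (edges G) (out_edges G v) k)
        (split_copies (edges H) (out_edges H (\<phi> v)) k)"
      using bij_betw_split_copies[OF P(3) out_edges_subset] P(4) out_edges_graph_iso_by[OF iso wf v] by simp
    fix x assume "x \<in> split_copies (edges G) (out_edges G v) k"
    then obtain e i where x: "x = (e, i)" "e \<in> edges G"
      unfolding split_copies_def out_edges_def by auto
    show "src (move_I H (\<phi> v) k q') (map_prod \<psi> id x) = map_prod \<phi> id (src (move_I G v k q) x)"
      and "rng (move_I H (\<phi> v) k q') (map_prod \<psi> id x) = map_prod \<phi> id (rng (move_I G v k q) x)"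
      unfolding move_I_def x using P(5,6)[OF x(2)] src_v[OF x(2)] rng_v[OF x(2)] q'[OF x(2)] by simp_all
  qed
qed

lemma wf_move_O:
  assumes wf: "wf_graph G" and c: "move_O_cond G v k p"
  shows "wf_graph (move_O G v k p)"
proof -
  have img: "p ` out_edges G v = {0..<k}" using c unfolding move_O_cond_def by simp
  have pk: "p e < k" if "e \<in> edges G" "src G e = v" for e
    using img that unfolding out_edges_def by auto
  have fin: "finite {(w, 0::nat) | w. w \<in> verts G \<and> w \<noteq> v}"
  proof -
    have "{(w, 0::nat) | w. w \<in> verts G \<and> w \<noteq> v} \<subseteq> (\<lambda>w. (w,0)) ` verts G" by auto
    then show ?thesis using wf unfolding wf_graph_def by (meson finite_imageI finite_subset)
  qed
  have fin2: "finite {(v, i) | i. i < k}"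
  proof -
    have "{(v, i) | i. i < k} = Pair v ` {..<k}" by auto
    then show ?thesis by simp
  qed
  show ?thesis unfolding wf_graph_def move_O_def graph.simps
    using fin fin2 wf pk unfolding wf_graph_def by auto
qed

lemma wf_move_I:
  assumes wf: "wf_graph G" and c: "move_I_cond G v k q"
  shows "wf_graph (move_I G v k q)"
proof -
  have img: "q ` in_edges G v = {0..<k}" using c unfolding move_I_cond_def by simp
  have qk: "q e < k" if "e \<in> edges G" "rng G e = v" for e
    using img that unfolding in_edges_def by auto
  have fin: "finite {(w, 0::nat) | w. w \<in> verts G \<and> w \<noteq> v}"
  proof -
    have "{(w, 0::nat) | w. w \<in> verts G \<and> w \<noteq> v} \<subseteq> (\<lambda>w. (w,0)) ` verts G" by auto
    then show ?thesis using wf unfolding wf_graph_def by (meson finite_imageI finite_subset)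
  qed
  have fin2: "finite {(v, i) | i. i < k}"
  proof -
    have "{(v, i) | i. i < k} = Pair v ` {..<k}" by auto
    then show ?thesis by simp
  qed
  show ?thesis unfolding wf_graph_def move_I_def graph.simps
    using fin fin2 wf qk unfolding wf_graph_def by auto
qed

lemma wf_move_R:
  assumes wf: "wf_graph G" and c: "move_R_cond G u f v"
  shows "wf_graph (move_R G u f)"
proof -
  have out: "out_edges G u = {f}" and loopfree: "rng G f \<noteq> u"
    using c unfolding move_R_cond_def by auto
  then have f: "f \<in> edges G" and from_u: "\<And>e. e \<in> edges G \<Longrightarrow> src G e = u \<longleftrightarrow> e = f"
    unfolding out_edges_def by auto
  have kept: "src G e \<in> verts G - {u} \<and> rng G e \<in> verts G - {u}"
    if "e \<in> edges G - in_edges G u - {f}" for e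
    using that wf_graphD[OF wf] from_u unfolding in_edges_def by auto
  have new: "src G e \<in> verts G - {u}" if "e \<in> in_edges G u" for e
  proof -
    have "e \<in> edges G" "rng G e = u" using that unfolding in_edges_def by auto
    then show ?thesis using wf_graphD(1)[OF wf] from_u loopfree by auto
  qed
  have target: "rng G f \<in> verts G - {u}" using wf_graphD(2)[OF wf f] loopfree by simp
  show ?thesis
    unfolding wf_graph_def move_R_def graph.simps
  proof (rule conjI)
    show "finite (verts G - {u})" using wf unfolding wf_graph_def by simp
    show "\<forall>x \<in> Inl ` (edges G - in_edges G u - {f}) \<union> Inr ` in_edges G u.
        (case x of Inl e \<Rightarrow> src G e | Inr e \<Rightarrow> src G e) \<in> verts G - {u} \<and>
        (case x of Inl e \<Rightarrow> rng G e | Inr e \<Rightarrow> rng G f) \<in> verts G - {u}"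
    proof
      fix x assume "x \<in> Inl ` (edges G - in_edges G u - {f}) \<union> Inr ` in_edges G u"
      then show "(case x of Inl e \<Rightarrow> src G e | Inr e \<Rightarrow> src G e) \<in> verts G - {u} \<and>
          (case x of Inl e \<Rightarrow> rng G e | Inr e \<Rightarrow> rng G f) \<in> verts G - {u}"
      proof (elim UnE imageE)
        fix e assume "e \<in> edges G - in_edges G u - {f}" "x = Inl e"
        then show ?thesis using kept by simp
      next
        fix e assume "e \<in> in_edges G u" "x = Inr e"
        then show ?thesis using new target by simp
      qed
    qed
  qed
qed

section \<open>Move equivalence\<close>

lemma move_equiv_nat_of_one_move: "one_move G H \<Longrightarrow> move_equiv_nat G H"
  unfolding move_equiv_nat_def by (rule r_into_rtranclp) simp

lemma move_equiv_nat_trans: "move_equiv_nat G H \<Longrightarrow> move_equiv_nat H K \<Longrightarrow> move_equiv_nat G K"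
  unfolding move_equiv_nat_def by (rule rtranclp_trans)

lemma move_equiv_nat_sym: "move_equiv_nat G H \<Longrightarrow> move_equiv_nat H G"
  unfolding move_equiv_nat_def
proof (induction rule: rtranclp_induct)
  case (step y z)
  then have "(sup one_move one_move\<inverse>\<inverse>) z y" by auto
  then show ?case using step(3) by (rule converse_rtranclp_into_rtranclp)
qed simp

text \<open>The relation \<open>move_equiv_nat\<close> is not closed under isomorphism by definition; for a graph
  with an edge, an out-splitting into a single part is an isomorphism and provides the missing step.\<close>

lemma one_move_of_graph_iso:
  fixes G H :: ngraph
  assumes wf: "wf_graph G" and e: "e \<in> edges G" and iso: "graph_iso G H"
  shows "one_move G H"
proof -
  define v where "v = src G e"
  have v: "v \<in> verts G" using wf_graphD(1)[OF wf e] unfolding v_def .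
  have "e \<in> out_edges G v" using e unfolding out_edges_def v_def by simp
  then have c: "move_O_cond G v 1 (\<lambda>_. 0)"
    unfolding move_O_cond_def is_sink_def using v by auto
  have V: "verts (move_O G v 1 (\<lambda>_. 0)) = verts G \<times> {0}"
    unfolding verts_move_O using v by (intro split_copies_1) simp
  have E: "edges (move_O G v 1 (\<lambda>_. 0)) = edges G \<times> {0}"
    unfolding edges_move_O by (rule split_copies_1[OF in_edges_subset])
  have "graph_iso_by fst fst (move_O G v 1 (\<lambda>_. 0)) G"
    unfolding graph_iso_by_def V E by (auto simp: bij_betw_def inj_on_def move_O_def)
  then have "graph_iso (move_O G v 1 (\<lambda>_. 0)) H"
    using iso graph_iso_iff_graph_iso_by graph_iso_trans by blast
  then show ?thesis unfolding one_move_def using wf c by blast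
qed

lemma move_equiv_refl: "move_equiv (G :: ('v::countable, 'e::countable) graph) G"
  unfolding move_equiv_def move_equiv_nat_def using graph_iso_nat_graph by blast

lemma move_equiv_sym: "move_equiv G H \<Longrightarrow> move_equiv H G"
  unfolding move_equiv_def using move_equiv_nat_sym by blast

lemma graph_iso_move_equiv_trans: "graph_iso G H \<Longrightarrow> move_equiv H K \<Longrightarrow> move_equiv G K"
  unfolding move_equiv_def using graph_iso_trans by blast

lemma move_equiv_graph_iso_trans: "move_equiv G H \<Longrightarrow> graph_iso K H \<Longrightarrow> move_equiv G K"
  unfolding move_equiv_def using graph_iso_trans by blast

lemma move_equiv_trans:
  assumes GH: "move_equiv G H" and HK: "move_equiv H K" and wf: "wf_graph H" and e: "e \<in> edges H"
  shows "move_equiv G K"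
proof -
  obtain G1 H1 where G1: "graph_iso G G1" and H1: "graph_iso H H1" and "move_equiv_nat G1 H1"
    using GH unfolding move_equiv_def by blast
  moreover obtain H2 K2 where "graph_iso H H2" and K2: "graph_iso K K2" and "move_equiv_nat H2 K2"
    using HK unfolding move_equiv_def by blast
  moreover obtain \<phi> \<psi> where iso: "graph_iso_by \<phi> \<psi> H H1"
    using H1 graph_iso_iff_graph_iso_by by blast
  moreover have "graph_iso H1 H2"
    using graph_iso_sym[OF H1 wf] \<open>graph_iso H H2\<close> graph_iso_trans by blast
  ultimately have "move_equiv_nat H1 H2"
    using one_move_of_graph_iso[OF wf_graph_iso_by[OF iso wf]] graph_iso_byD(4)[OF iso] e
      move_equiv_nat_of_one_move by blast
  then have "move_equiv_nat G1 K2"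
    using \<open>move_equiv_nat G1 H1\<close> \<open>move_equiv_nat H2 K2\<close> move_equiv_nat_trans by blast
  then show ?thesis unfolding move_equiv_def using G1 K2 by blast
qed

lemma move_equiv_of_one_move_nat_graph:
  fixes G :: "('v::countable, 'e::countable) graph"
  assumes "one_move (nat_graph G) H'" "graph_iso H H'"
  shows "move_equiv G H"
  unfolding move_equiv_def using assms graph_iso_nat_graph move_equiv_nat_of_one_move by blast

lemma move_equiv_move_S:
  fixes G :: "('v::countable, 'e::countable) graph"
  assumes wf: "wf_graph G" and c: "move_S_cond G v"
  shows "move_equiv G (move_S G v)"
proof (rule move_equiv_of_one_move_nat_graph)
  note T = move_S_graph_iso_by[OF graph_iso_by_nat_graph wf c]
  let ?M = "move_S (nat_graph G) (to_nat v)"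
  show "one_move (nat_graph G) (nat_graph ?M)"
    unfolding one_move_def using wf_nat_graph[OF wf] T(1) graph_iso_nat_graph by blast
  show "graph_iso (move_S G v) (nat_graph ?M)"
    using T(2) graph_iso_nat_graph graph_iso_iff_graph_iso_by graph_iso_trans by blast
qed

lemma move_equiv_move_R:
  fixes G :: "('v::countable, 'e::countable) graph"
  assumes wf: "wf_graph G" and c: "move_R_cond G u f v"
  shows "move_equiv G (move_R G u f)"
proof (rule move_equiv_of_one_move_nat_graph)
  note T = move_R_graph_iso_by[OF graph_iso_by_nat_graph wf c]
  let ?M = "move_R (nat_graph G) (to_nat u) (to_nat f)"
  show "one_move (nat_graph G) (nat_graph ?M)"
    unfolding one_move_def using wf_nat_graph[OF wf] T(1) graph_iso_nat_graph by blast
  show "graph_iso (move_R G u f) (nat_graph ?M)"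
    using T(2) graph_iso_nat_graph graph_iso_iff_graph_iso_by graph_iso_trans by blast
qed

lemma move_equiv_move_O:
  fixes G :: "('v::countable, 'e::countable) graph"
  assumes wf: "wf_graph G" and c: "move_O_cond G v k p"
  shows "move_equiv G (move_O G v k p)"
proof (rule move_equiv_of_one_move_nat_graph)
  note T = move_O_graph_iso_by[OF graph_iso_by_nat_graph wf c]
  let ?M = "move_O (nat_graph G) (to_nat v) k (p \<circ> inv_into (edges G) to_nat)"
  show "one_move (nat_graph G) (nat_graph ?M)"
    unfolding one_move_def using wf_nat_graph[OF wf] T(1) graph_iso_nat_graph by blast
  show "graph_iso (move_O G v k p) (nat_graph ?M)"
    using T(2) graph_iso_nat_graph graph_iso_iff_graph_iso_by graph_iso_trans by blast
qed

lemma move_equiv_move_I: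
  fixes G :: "('v::countable, 'e::countable) graph"
  assumes wf: "wf_graph G" and c: "move_I_cond G v k q"
  shows "move_equiv G (move_I G v k q)"
proof (rule move_equiv_of_one_move_nat_graph)
  note T = move_I_graph_iso_by[OF graph_iso_by_nat_graph wf c]
  let ?M = "move_I (nat_graph G) (to_nat v) k (q \<circ> inv_into (edges G) to_nat)"
  show "one_move (nat_graph G) (nat_graph ?M)"
    unfolding one_move_def using wf_nat_graph[OF wf] T(1) graph_iso_nat_graph by blast
  show "graph_iso (move_I G v k q) (nat_graph ?M)"
    using T(2) graph_iso_nat_graph graph_iso_iff_graph_iso_by graph_iso_trans by blast
qed

section \<open>Contracting the unique out-edge of a vertex\<close>

text \<open>This is move (R) without the requirement that all edges into \<open>w\<close> come from one vertex;
  the edges into \<open>w\<close> are redirected to the range of \<open>f\<close> instead of being replaced by copies.\<close>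

definition contract :: "('v, 'e) graph \<Rightarrow> 'v \<Rightarrow> 'e \<Rightarrow> ('v, 'e) graph" where
  "contract G w f = \<lparr>verts = verts G - {w}, edges = edges G - {f}, src = src G,
     rng = (\<lambda>e. if rng G e = w then rng G f else rng G e)\<rparr>"

definition contractible :: "('v, 'e) graph \<Rightarrow> 'v \<Rightarrow> 'e \<Rightarrow> bool" where
  "contractible G w f \<longleftrightarrow> w \<in> verts G \<and> out_edges G w = {f} \<and> rng G f \<noteq> w"

lemma contractibleD:
  assumes "contractible G w f" "wf_graph G"
  shows "w \<in> verts G" "out_edges G w = {f}" "rng G f \<noteq> w" "f \<in> edges G"
    "\<And>e. e \<in> edges G \<Longrightarrow> src G e = w \<longleftrightarrow> e = f" "src G f = w" "rng G f \<in> verts G"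
    "is_regular G w"
proof -
  have cc: "w \<in> verts G \<and> out_edges G w = {f} \<and> rng G f \<noteq> w" using assms(1) unfolding contractible_def .
  show w: "w \<in> verts G" and out: "out_edges G w = {f}" and r: "rng G f \<noteq> w" using cc by auto
  have fo: "f \<in> out_edges G w" unfolding out by simp
  then show fE: "f \<in> edges G" and "src G f = w" unfolding out_edges_def by auto
  show "rng G f \<in> verts G" using assms(2) fE unfolding wf_graph_def by auto
  show "src G e = w \<longleftrightarrow> e = f" if "e \<in> edges G" for e
  proof
    assume "src G e = w" then have "e \<in> out_edges G w" using that unfolding out_edges_def by simp
    then show "e = f" unfolding out by simp
  next
    assume "e = f" then show "src G e = w" using fo unfolding out_edges_def by simp
  qed
  show "is_regular G w" unfolding is_regular_def is_sink_def is_inf_emitter_def out using w by simp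
qed

lemma wf_contract:
  assumes "wf_graph G" "contractible G w f"
  shows "wf_graph (contract G w f)"
proof -
  note C = contractibleD[OF assms(2,1)]
  have "src G e \<in> verts G - {w} \<and> (if rng G e = w then rng G f else rng G e) \<in> verts G - {w}"
    if "e \<in> edges G - {f}" for e
    using that assms(1) C unfolding wf_graph_def by auto
  then show ?thesis using assms(1) unfolding wf_graph_def contract_def by auto
qed

lemma contract_graph_iso_by:
  assumes iso: "graph_iso_by \<phi> \<psi> G H" and wf: "wf_graph G" and c: "contractible G w f"
  shows "contractible H (\<phi> w) (\<psi> f)"
    and "graph_iso_by \<phi> \<psi> (contract G w f) (contract H (\<phi> w) (\<psi> f))"
proof -
  note P = graph_iso_byD[OF iso] and C = contractibleD[OF c wf]
  have eqv: "\<phi> x = \<phi> w \<longleftrightarrow> x = w" if "x \<in> verts G" for x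
    using inj_on_eq_iff[OF P(1) that C(1)] .
  show "contractible H (\<phi> w) (\<psi> f)"
    unfolding contractible_def using P(2) C(1) out_edges_graph_iso_by[OF iso wf C(1)] C(2) P(6)[OF C(4)] eqv[OF C(7)] C(3)
    by auto
  have V: "bij_betw \<phi> (verts G - {w}) (verts H - {\<phi> w})"
    unfolding bij_betw_def using verts_minus_graph_iso_by[OF iso C(1)] inj_on_subset[OF P(1)] by auto
  have E: "bij_betw \<psi> (edges G - {f}) (edges H - {\<psi> f})"
    unfolding bij_betw_def using inj_on_image_set_diff[OF P(3), of "edges G" "{f}"] C(4) P(4) inj_on_subset[OF P(3)]
    by auto
  show "graph_iso_by \<phi> \<psi> (contract G w f) (contract H (\<phi> w) (\<psi> f))"
    unfolding graph_iso_by_def contract_def graph.simps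
  proof (intro conjI V E ballI)
    fix e assume e: "e \<in> edges G - {f}"
    then have eE: "e \<in> edges G" by simp
    show "src H (\<psi> e) = \<phi> (src G e)" using P(5)[OF eE] .
    show "(if rng H (\<psi> e) = \<phi> w then rng H (\<psi> f) else rng H (\<psi> e)) =
          \<phi> (if rng G e = w then rng G f else rng G e)"
      using P(6)[OF eE] P(6)[OF C(4)] eqv[OF wf_graphD(2)[OF wf eE]] by simp
  qed
qed

lemma move_equiv_contract_source:
  fixes G :: "('v::countable, 'e::countable) graph"
  assumes wf: "wf_graph G" and c: "contractible G w f" and src0: "in_edges G w = {}"
  shows "move_equiv G (contract G w f)"
proof -
  note C = contractibleD[OF c wf]
  have sc: "move_S_cond G w" unfolding move_S_cond_def is_source_def using C(8) src0 by simp
  have rw: "\<And>e. e \<in> edges G \<Longrightarrow> rng G e \<noteq> w" using src0 unfolding in_edges_def by blast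
  have Eeq: "edges G - {f} = {e \<in> edges G. src G e \<noteq> w}" using C(5) by blast
  have "graph_iso_by id id (contract G w f) (move_S G w)"
    unfolding graph_iso_by_def contract_def move_S_def graph.simps Eeq[symmetric]
    using rw by simp
  then have "graph_iso (contract G w f) (move_S G w)"
    using graph_iso_iff_graph_iso_by by blast
  with move_equiv_move_S[OF wf sc] show ?thesis by (rule move_equiv_graph_iso_trans)
qed

lemma move_equiv_contract_single_source:
  fixes G :: "('v::countable, 'e::countable) graph"
  assumes wf: "wf_graph G" and c: "contractible G w f" and src1: "src G ` in_edges G w = {s}"
  shows "move_equiv G (contract G w f)"
proof -
  note C = contractibleD[OF c wf]
  have rc: "move_R_cond G w f s" unfolding move_R_cond_def using C(1,2,3,8) src1 by simp
  define \<psi> where "\<psi> e = (if rng G e = w then Inr e else Inl e)" for e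
  have inj: "inj_on \<psi> (edges G - {f})" unfolding \<psi>_def inj_on_def by auto
  have img: "\<psi> ` (edges G - {f}) = Inl ` (edges G - in_edges G w - {f}) \<union> Inr ` in_edges G w"
  proof (intro equalityI subsetI)
    fix x assume "x \<in> \<psi> ` (edges G - {f})"
    then obtain e where e: "e \<in> edges G" "e \<noteq> f" "x = \<psi> e" by blast
    show "x \<in> Inl ` (edges G - in_edges G w - {f}) \<union> Inr ` in_edges G w"
      using e unfolding \<psi>_def in_edges_def by auto
  next
    fix x assume x: "x \<in> Inl ` (edges G - in_edges G w - {f}) \<union> Inr ` in_edges G w"
    have fi: "f \<notin> in_edges G w" using C(3) unfolding in_edges_def by simp
    show "x \<in> \<psi> ` (edges G - {f})"
    proof (cases x)
      case (Inl e) then have "e \<in> edges G - {f}" "rng G e \<noteq> w" using x unfolding in_edges_def by auto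
      then show ?thesis using Inl unfolding \<psi>_def by (auto intro!: image_eqI[of _ _ e])
    next
      case (Inr e) then have "e \<in> edges G - {f}" "rng G e = w" using x fi unfolding in_edges_def by auto
      then show ?thesis using Inr unfolding \<psi>_def by (auto intro!: image_eqI[of _ _ e])
    qed
  qed
  have "graph_iso_by id \<psi> (contract G w f) (move_R G w f)"
    unfolding graph_iso_by_def contract_def move_R_def graph.simps
  proof (intro conjI ballI)
    show "bij_betw id (verts G - {w}) (verts G - {w})" by simp
    show "bij_betw \<psi> (edges G - {f}) (Inl ` (edges G - in_edges G w - {f}) \<union> Inr ` in_edges G w)"
      unfolding bij_betw_def using inj img by simp
    fix e assume "e \<in> edges G - {f}"
    show "(case \<psi> e of Inl e \<Rightarrow> src G e | Inr e \<Rightarrow> src G e) = id (src G e)"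
      unfolding \<psi>_def by simp
    show "(case \<psi> e of Inl e \<Rightarrow> rng G e | Inr e \<Rightarrow> rng G f) = id (if rng G e = w then rng G f else rng G e)"
      unfolding \<psi>_def by simp
  qed
  then have "graph_iso (contract G w f) (move_R G w f)"
    using graph_iso_iff_graph_iso_by by blast
  with move_equiv_move_R[OF wf rc] show ?thesis by (rule move_equiv_graph_iso_trans)
qed

text \<open>If the edges into \<open>w\<close> come from two distinct vertices \<open>s\<close> and \<open>s'\<close>, in-splitting \<open>w\<close>
  separates the edges from \<open>s\<close> into the copy \<open>(w, 0)\<close>; move (R) removes that copy, and the
  copy \<open>(w, 1)\<close> that remains receives edges from fewer vertices than \<open>w\<close> did.\<close>

locale contract_split =
  fixes G :: "('v::countable, 'e::countable) graph" and w :: 'v and f :: 'e and s s' :: 'v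
  assumes wf: "wf_graph G" and contr: "contractible G w f"
    and s: "s \<in> src G ` in_edges G w" and s': "s' \<in> src G ` in_edges G w" and s'_ne_s: "s' \<noteq> s"
begin

definition "split_class e = (if src G e = s then 0 else 1::nat)"
definition "G_split = move_I G w 2 split_class"
definition "from_s = {e \<in> edges G. rng G e = w \<and> src G e = s}"
definition "G_reduced = move_R G_split (w, 0) (f, 0)"

lemmas w_vert = contractibleD(1)[OF contr wf]
  and f_not_loop = contractibleD(3)[OF contr wf]
  and f_edge = contractibleD(4)[OF contr wf]
  and from_w_iff = contractibleD(5)[OF contr wf]
  and src_f = contractibleD(6)[OF contr wf]
  and w_regular = contractibleD(8)[OF contr wf]

lemma move_I_cond_G: "move_I_cond G w 2 split_class"
proof -
  obtain e0 where e0: "e0 \<in> in_edges G w" "src G e0 = s" using s by blast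
  obtain e1 where e1: "e1 \<in> in_edges G w" "src G e1 = s'" using s' by blast
  have "split_class ` in_edges G w = {0..<2}"
  proof (intro equalityI subsetI)
    fix i :: nat assume "i \<in> {0..<2}"
    then have "i = split_class e0 \<or> i = split_class e1"
      unfolding split_class_def using e0 e1 s'_ne_s by auto
    then show "i \<in> split_class ` in_edges G w" using e0 e1 by blast
  qed (auto simp: split_class_def)
  moreover have "\<not> is_source G w" using e0 unfolding is_source_def by blast
  ultimately show ?thesis unfolding move_I_cond_def using w_regular by simp
qed

lemma edges_G_split: "edges G_split = (\<lambda>e. (e, 0)) ` edges G \<union> {(f, 1)}"
  unfolding G_split_def edges_move_I contractibleD(2)[OF contr wf] by (rule split_copies_2[OF f_edge])

lemma verts_G_split: "verts G_split = (\<lambda>x. (x, 0)) ` verts G \<union> {(w, 1)}"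
  unfolding G_split_def verts_move_I by (rule split_copies_2[OF w_vert])

lemma src_G_split: "src G_split (e, 0) = (src G e, 0)"
  unfolding G_split_def move_I_def by simp
lemma src_G_split_copy: "src G_split (f, 1) = (w, 1)"
  unfolding G_split_def move_I_def using src_f by simp
lemma rng_G_split: "rng G_split (e, i) = (if rng G e = w then (w, split_class e) else (rng G e, 0))"
  unfolding G_split_def move_I_def by simp

lemma f_not_from_s: "f \<notin> from_s" unfolding from_s_def using f_not_loop by simp

lemma in_edges_G_split: "in_edges G_split (w, 0) = (\<lambda>e. (e, 0)) ` from_s"
proof (intro equalityI subsetI)
  fix x :: "'e \<times> nat" assume "x \<in> in_edges G_split (w, 0)"
  then have x: "x \<in> (\<lambda>e. (e, 0)) ` edges G \<union> {(f, 1)}" "rng G_split x = (w, 0)" unfolding in_edges_def edges_G_split by auto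
  from x(1) show "x \<in> (\<lambda>e. (e, 0)) ` from_s"
  proof (elim UnE)
    assume "x \<in> (\<lambda>e. (e, 0)) ` edges G"
    then obtain e where e: "x = (e, 0)" "e \<in> edges G" by blast
    then have "rng G e = w \<and> src G e = s" using x(2) by (auto simp: rng_G_split split_class_def split: if_splits)
    then show ?thesis using e unfolding from_s_def by auto
  next
    assume "x \<in> {(f, 1)}" then show ?thesis using x(2) f_not_loop by (auto simp: rng_G_split)
  qed
next
  fix x :: "'e \<times> nat" assume "x \<in> (\<lambda>e. (e, 0)) ` from_s"
  then obtain e where e: "x = (e, 0)" "e \<in> from_s" by blast
  have r: "rng G_split (e, 0) = (w, 0)" using e by (simp add: rng_G_split from_s_def split_class_def)
  then show "x \<in> in_edges G_split (w, 0)" using e unfolding in_edges_def edges_G_split from_s_def by auto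
qed

lemma out_edges_G_split: "out_edges G_split (w, 0) = {(f, 0)}"
proof (intro equalityI subsetI)
  fix x :: "'e \<times> nat" assume "x \<in> out_edges G_split (w, 0)"
  then have x: "x \<in> (\<lambda>e. (e, 0)) ` edges G \<union> {(f, 1)}" "src G_split x = (w, 0)" unfolding out_edges_def edges_G_split by auto
  from x(1) show "x \<in> {(f, 0)}"
  proof (elim UnE)
    assume "x \<in> (\<lambda>e. (e, 0)) ` edges G"
    then obtain e where e: "x = (e, 0)" "e \<in> edges G" by blast
    then have "src G e = w" using x(2) by (simp add: src_G_split)
    then show ?thesis using e from_w_iff by simp
  next
    assume "x \<in> {(f, 1)}" then show ?thesis using x(2) src_G_split_copy by auto
  qed
next
  fix x :: "'e \<times> nat" assume "x \<in> {(f, 0)}"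
  have r: "src G_split (f, 0) = (w, 0)" by (simp add: src_G_split src_f)
  then show "x \<in> out_edges G_split (w, 0)" unfolding out_edges_def edges_G_split using f_edge \<open>x \<in> {(f, 0)}\<close> by auto
qed

lemma from_s_nonempty: "from_s \<noteq> {}"
proof -
  obtain e0 where e0: "e0 \<in> in_edges G w" "src G e0 = s" using s by blast
  then show ?thesis unfolding from_s_def in_edges_def by auto
qed

lemma move_R_cond_G_split: "move_R_cond G_split (w, 0) (f, 0) (s, 0)"
proof -
  have v: "(w, 0) \<in> verts G_split" unfolding verts_G_split using w_vert by auto
  have reg: "is_regular G_split (w, 0)" unfolding is_regular_def is_sink_def is_inf_emitter_def out_edges_G_split using v by simp
  have r: "rng G_split (f, 0) \<noteq> (w, 0)" unfolding rng_G_split using f_not_loop by simp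
  have "src G_split ` in_edges G_split (w, 0) = (\<lambda>e. (src G e, 0)) ` from_s" unfolding in_edges_G_split image_image src_G_split ..
  also have "\<dots> = (\<lambda>e. (s, 0)) ` from_s" by (rule image_cong) (auto simp: from_s_def)
  also have "\<dots> = {(s, 0)}" using from_s_nonempty by auto
  finally show ?thesis unfolding move_R_cond_def using v reg out_edges_G_split r by simp
qed

lemma wf_G_split: "wf_graph G_split" unfolding G_split_def by (rule wf_move_I[OF wf move_I_cond_G])
lemma wf_G_reduced: "wf_graph G_reduced" unfolding G_reduced_def by (rule wf_move_R[OF wf_G_split move_R_cond_G_split])

lemma edges_G_reduced: "edges G_reduced = Inl ` ((\<lambda>e. (e, 0)) ` (edges G - from_s - {f}) \<union> {(f, 1)}) \<union> Inr ` ((\<lambda>e. (e, 0)) ` from_s)"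
proof -
  have "edges G_split - in_edges G_split (w, 0) - {(f, 0)} = (\<lambda>e. (e, 0)) ` (edges G - from_s - {f}) \<union> {(f, 1)}"
    unfolding edges_G_split in_edges_G_split by auto
  then show ?thesis unfolding G_reduced_def move_R_def graph.simps in_edges_G_split by simp
qed

lemma verts_G_reduced: "verts G_reduced = (\<lambda>x. (x, 0)) ` (verts G - {w}) \<union> {(w, 1)}"
  unfolding G_reduced_def move_R_def graph.simps verts_G_split by auto

lemma src_G_reduced: "src G_reduced x = (case x of Inl e \<Rightarrow> src G_split e | Inr e \<Rightarrow> src G_split e)"
  unfolding G_reduced_def move_R_def by simp
lemma rng_G_reduced: "rng G_reduced x = (case x of Inl e \<Rightarrow> rng G_split e | Inr e \<Rightarrow> rng G_split (f, 0))"
  unfolding G_reduced_def move_R_def by simp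

lemma from_s_subset: "from_s \<subseteq> edges G" unfolding from_s_def by auto

lemma contractible_G_reduced: "contractible G_reduced (w, 1) (Inl (f, 1))"
proof -
  have v: "(w, 1) \<in> verts G_reduced" unfolding verts_G_reduced by simp
  have "out_edges G_reduced (w, 1) = {Inl (f, 1)}"
  proof (intro equalityI subsetI)
    fix x :: "('e \<times> nat) + ('e \<times> nat)" assume "x \<in> out_edges G_reduced (w, 1)"
    then have x: "x \<in> edges G_reduced" "src G_reduced x = (w, 1)" unfolding out_edges_def by auto
    from x(1) show "x \<in> {Inl (f, 1)}" unfolding edges_G_reduced
    proof (elim UnE imageE)
      fix y e assume "y = (e, 0)" "x = Inl y" then show ?thesis using x(2) by (simp add: src_G_reduced src_G_split)
    next
      fix y assume "y \<in> {(f, 1::nat)}" "x = Inl y" then show ?thesis by simp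
    next
      fix y e assume "y = (e, 0)" "x = Inr y" then show ?thesis using x(2) by (simp add: src_G_reduced src_G_split)
    qed
  next
    fix x :: "('e \<times> nat) + ('e \<times> nat)" assume "x \<in> {Inl (f, 1)}"
    then show "x \<in> out_edges G_reduced (w, 1)" unfolding out_edges_def edges_G_reduced src_G_reduced using src_G_split_copy by auto
  qed
  moreover have "rng G_reduced (Inl (f, 1)) \<noteq> (w, 1)" using f_not_loop by (simp add: rng_G_reduced rng_G_split)
  ultimately show ?thesis unfolding contractible_def using v by simp
qed

lemma in_edges_G_reduced: "in_edges G_reduced (w, 1) = Inl ` (\<lambda>e. (e, 0)) ` {e \<in> edges G. rng G e = w \<and> src G e \<noteq> s}"
proof (intro equalityI subsetI)
  fix x :: "('e \<times> nat) + ('e \<times> nat)" assume "x \<in> in_edges G_reduced (w, 1)"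
  then have x: "x \<in> edges G_reduced" "rng G_reduced x = (w, 1)" unfolding in_edges_def by auto
  from x(1) show "x \<in> Inl ` (\<lambda>e. (e, 0)) ` {e \<in> edges G. rng G e = w \<and> src G e \<noteq> s}" unfolding edges_G_reduced
  proof (elim UnE imageE)
    fix y e assume y: "y = (e, 0)" "x = Inl y" "e \<in> edges G - from_s - {f}"
    then have "rng G e = w \<and> split_class e = 1" using x(2) by (auto simp: rng_G_reduced rng_G_split split: if_splits)
    then show ?thesis using y unfolding split_class_def by (auto split: if_splits)
  next
    fix y assume "y \<in> {(f, 1::nat)}" "x = Inl y" then show ?thesis using x(2) f_not_loop by (simp add: rng_G_reduced rng_G_split)
  next
    fix y e assume "y = (e, 0)" "x = Inr y" then show ?thesis using x(2) f_not_loop by (simp add: rng_G_reduced rng_G_split)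
  qed
next
  fix x :: "('e \<times> nat) + ('e \<times> nat)" assume "x \<in> Inl ` (\<lambda>e. (e, 0)) ` {e \<in> edges G. rng G e = w \<and> src G e \<noteq> s}"
  then obtain e where e: "x = Inl (e, 0)" "e \<in> edges G" "rng G e = w" "src G e \<noteq> s" by blast
  have "e \<notin> from_s" "e \<noteq> f" using e f_not_loop unfolding from_s_def by auto
  then have "x \<in> edges G_reduced" unfolding edges_G_reduced using e by auto
  moreover have "rng G_reduced x = (w, 1)" using e by (simp add: rng_G_reduced rng_G_split split_class_def)
  ultimately show "x \<in> in_edges G_reduced (w, 1)" unfolding in_edges_def by simp
qed

lemma card_srcs_G_reduced_less: "card (src G_reduced ` in_edges G_reduced (w, 1)) < card (src G ` in_edges G w)"
proof -
  let ?S = "src G ` in_edges G w"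
  have "src G_reduced ` in_edges G_reduced (w, 1) = (\<lambda>e. (src G e, 0::nat)) ` {e \<in> edges G. rng G e = w \<and> src G e \<noteq> s}"
    unfolding in_edges_G_reduced image_image by (simp add: src_G_reduced src_G_split)
  also have "\<dots> = (\<lambda>x. (x, 0)) ` (?S - {s})"
    unfolding in_edges_def by auto
  finally have eq: "src G_reduced ` in_edges G_reduced (w, 1) = (\<lambda>x. (x, 0::nat)) ` (?S - {s})" .
  have fin: "finite ?S"
  proof -
    have "?S \<subseteq> verts G" using wf_graphD(1)[OF wf] unfolding in_edges_def by auto
    then show ?thesis using wf unfolding wf_graph_def by (meson finite_subset)
  qed
  have "card ((\<lambda>x. (x, 0::nat)) ` (?S - {s})) = card (?S - {s})" by (rule card_image) (auto simp: inj_on_def)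
  also have "\<dots> < card ?S" using fin s by (meson card_Diff1_less)
  finally show ?thesis unfolding eq .
qed

definition "reduced_edge e = (if e \<in> from_s then Inr (e, 0::nat) else Inl (e, 0::nat))"

lemma edges_contract_G_reduced:
  "edges (contract G_reduced (w, 1) (Inl (f, 1))) = reduced_edge ` (edges G - {f})"
proof -
  have "edges (contract G_reduced (w, 1) (Inl (f, 1))) =
      Inl ` (\<lambda>e. (e, 0)) ` (edges G - from_s - {f}) \<union> Inr ` (\<lambda>e. (e, 0)) ` from_s"
    unfolding contract_def graph.simps edges_G_reduced by auto
  also have "\<dots> = reduced_edge ` (edges G - {f})"
  proof (intro equalityI subsetI)
    fix x :: "('e \<times> nat) + ('e \<times> nat)"
    assume "x \<in> Inl ` (\<lambda>e. (e, 0)) ` (edges G - from_s - {f}) \<union> Inr ` (\<lambda>e. (e, 0)) ` from_s"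
    then show "x \<in> reduced_edge ` (edges G - {f})"
    proof (elim UnE imageE)
      fix y e assume "e \<in> edges G - from_s - {f}" "y = (e, 0)" "x = Inl y"
      then show ?thesis unfolding reduced_edge_def by (auto intro!: image_eqI[of _ _ e])
    next
      fix y e assume "e \<in> from_s" "y = (e, 0)" "x = Inr y"
      then show ?thesis using f_not_from_s from_s_subset unfolding reduced_edge_def
        by (auto intro!: image_eqI[of _ _ e])
    qed
  qed (auto simp: reduced_edge_def)
  finally show ?thesis .
qed

lemma contract_G_reduced_iso:
  "graph_iso_by (\<lambda>x. (x, 0)) reduced_edge (contract G w f) (contract G_reduced (w, 1) (Inl (f, 1)))"
  unfolding graph_iso_by_def edges_contract_G_reduced
proof (intro conjI)
  show "bij_betw (\<lambda>x. (x, 0::nat)) (verts (contract G w f)) (verts (contract G_reduced (w, 1) (Inl (f, 1))))"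
    unfolding contract_def graph.simps verts_G_reduced bij_betw_def by (auto simp: inj_on_def)
  have "inj_on reduced_edge (edges G - {f})" unfolding reduced_edge_def inj_on_def by auto
  then show "bij_betw reduced_edge (edges (contract G w f)) (reduced_edge ` (edges G - {f}))"
    unfolding bij_betw_def contract_def graph.simps by simp
  show "\<forall>e\<in>edges (contract G w f).
      src (contract G_reduced (w, 1) (Inl (f, 1))) (reduced_edge e) = (src (contract G w f) e, 0) \<and>
      rng (contract G_reduced (w, 1) (Inl (f, 1))) (reduced_edge e) = (rng (contract G w f) e, 0)"
  proof
    fix e assume "e \<in> edges (contract G w f)"
    then have e: "e \<in> edges G" "e \<noteq> f" unfolding contract_def by auto
    show "src (contract G_reduced (w, 1) (Inl (f, 1))) (reduced_edge e) = (src (contract G w f) e, 0) \<and>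
        rng (contract G_reduced (w, 1) (Inl (f, 1))) (reduced_edge e) = (rng (contract G w f) e, 0)"
    proof (cases "e \<in> from_s")
      case True
      then have "rng G e = w" unfolding from_s_def by simp
      then show ?thesis using True f_not_loop unfolding reduced_edge_def contract_def graph.simps
        by (simp add: src_G_reduced rng_G_reduced src_G_split rng_G_split from_s_def)
    next
      case False
      then have "rng G e = w \<Longrightarrow> src G e \<noteq> s" using e unfolding from_s_def by auto
      then show ?thesis using False f_not_loop unfolding reduced_edge_def contract_def graph.simps
        by (simp add: src_G_reduced rng_G_reduced src_G_split rng_G_split split_class_def)
    qed
  qed
qed

lemma move_equiv_G_reduced: "move_equiv G G_reduced"
proof (rule move_equiv_trans[where e = "(f, 1)"])
  show "move_equiv G G_split"
    unfolding G_split_def by (rule move_equiv_move_I[OF wf move_I_cond_G])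
  show "move_equiv G_split G_reduced"
    unfolding G_reduced_def by (rule move_equiv_move_R[OF wf_G_split move_R_cond_G_split])
qed (use wf_G_split edges_G_split in simp_all)

lemma move_equiv_contract_of_G_reduced:
  assumes "move_equiv G_reduced (contract G_reduced (w, 1) (Inl (f, 1)))"
  shows "move_equiv G (contract G w f)"
proof (rule move_equiv_trans[OF move_equiv_G_reduced, where e = "Inl (f, 1)"])
  show "move_equiv G_reduced (contract G w f)"
    using assms contract_G_reduced_iso graph_iso_iff_graph_iso_by
    by (blast intro: move_equiv_graph_iso_trans)
qed (use wf_G_reduced edges_G_reduced in simp_all)

end

lemma move_equiv_contract_of_nat_graph:
  fixes G :: "('v::countable, 'e::countable) graph"
  assumes wf: "wf_graph G" and c: "contractible G w f"
    and "move_equiv (nat_graph G) (contract (nat_graph G) (to_nat w) (to_nat f))"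
  shows "move_equiv G (contract G w f)"
proof -
  note iso = contract_graph_iso_by[OF graph_iso_by_nat_graph wf c]
  have "move_equiv G (contract (nat_graph G) (to_nat w) (to_nat f))"
    by (rule graph_iso_move_equiv_trans[OF graph_iso_nat_graph assms(3)])
  moreover have "graph_iso (contract G w f) (contract (nat_graph G) (to_nat w) (to_nat f))"
    using iso(2) graph_iso_iff_graph_iso_by by blast
  ultimately show ?thesis by (rule move_equiv_graph_iso_trans)
qed

text \<open>The induction runs over graphs on the naturals, since each splitting step changes the
  vertex and edge types.\<close>

lemma move_equiv_contract_nat:
  fixes G :: ngraph
  assumes "wf_graph G" "contractible G w f"
  shows "move_equiv G (contract G w f)"
  using assms
proof (induction "card (src G ` in_edges G w)" arbitrary: G w f rule: less_induct)
  case less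
  note wf = less.prems(1) and c = less.prems(2)
  consider "in_edges G w = {}" | s where "src G ` in_edges G w = {s}"
    | s s' where "s \<in> src G ` in_edges G w" "s' \<in> src G ` in_edges G w" "s' \<noteq> s"
    by blast
  then show ?case
  proof cases
    case 1
    then show ?thesis by (rule move_equiv_contract_source[OF wf c])
  next
    case 2
    then show ?thesis by (rule move_equiv_contract_single_source[OF wf c])
  next
    case (3 s s')
    interpret split: contract_split G w f s s'
      using wf c 3 by unfold_locales
    note iso = graph_iso_by_nat_graph[of split.G_reduced]
    have fewer_srcs: "card (src (nat_graph split.G_reduced) ` in_edges (nat_graph split.G_reduced) (to_nat (w, 1::nat)))
        < card (src G ` in_edges G w)"
      using card_srcs_in_edges_graph_iso_by[OF iso split.wf_G_reduced] split.card_srcs_G_reduced_less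
      by (simp add: split.verts_G_reduced)
    have "move_equiv (nat_graph split.G_reduced)
        (contract (nat_graph split.G_reduced) (to_nat (w, 1::nat)) (to_nat (Inl (f, 1::nat) :: (nat \<times> nat) + (nat \<times> nat))))"
      using contract_graph_iso_by(1)[OF iso split.wf_G_reduced split.contractible_G_reduced]
      by (rule less.hyps[OF fewer_srcs wf_nat_graph[OF split.wf_G_reduced]])
    then show ?thesis
      by (intro split.move_equiv_contract_of_G_reduced
          move_equiv_contract_of_nat_graph[OF split.wf_G_reduced split.contractible_G_reduced])
  qed
qed

theorem move_equiv_contract:
  fixes G :: "('v::countable, 'e::countable) graph"
  assumes wf: "wf_graph G" and c: "contractible G w f"
  shows "move_equiv G (contract G w f)"
  using contract_graph_iso_by(1)[OF graph_iso_by_nat_graph wf c]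
  by (intro move_equiv_contract_of_nat_graph[OF wf c] move_equiv_contract_nat[OF wf_nat_graph[OF wf]])

section \<open>Graphs given by edge counts\<close>

definition ecard :: "'a set \<Rightarrow> enat" where
  "ecard S = (if finite S then enat (card S) else \<infinity>)"

definition edges_between :: "('v, 'e) graph \<Rightarrow> 'v \<Rightarrow> 'v \<Rightarrow> 'e set" where
  "edges_between G x y = {e \<in> edges G. src G e = x \<and> rng G e = y}"

lemma ecard_image: "inj_on f A \<Longrightarrow> ecard (f ` A) = ecard A"
  unfolding ecard_def by (simp add: card_image finite_image_iff)

lemma ecard_Un_disjoint: "A \<inter> B = {} \<Longrightarrow> ecard (A \<union> B) = ecard A + ecard B"
  unfolding ecard_def by (simp add: card_Un_disjoint)

lemma ecard_Diff_singleton: "x \<in> A \<Longrightarrow> ecard (A - {x}) = ecard A - 1"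
  unfolding ecard_def by (auto simp: one_enat_def)

lemma ecard_less_enat: "ecard {k. enat k < a} = a"
proof (cases a)
  case (enat m)
  then have "{k. enat k < a} = {..<m}" by auto
  then show ?thesis unfolding ecard_def using enat by simp
next
  case infinity
  then have "{k. enat k < a} = UNIV" by auto
  then show ?thesis unfolding ecard_def using infinity by simp
qed

lemma bij_betw_of_ecard_eq:
  assumes "countable A" "countable B" "ecard A = ecard B"
  obtains b where "bij_betw b A B"
proof (cases "finite A")
  case True
  then have "finite B" "card A = card B" using assms(3) unfolding ecard_def by (auto split: if_splits)
  then show ?thesis using True finite_same_card_bij that by blast
next
  case False
  then have "infinite B" using assms(3) unfolding ecard_def by (auto split: if_splits)
  obtain a :: "_ \<Rightarrow> nat" where a: "bij_betw a A UNIV"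
    using countableE_infinite[OF assms(1) False] by blast
  obtain b :: "_ \<Rightarrow> nat" where b: "bij_betw b B UNIV"
    using countableE_infinite[OF assms(2) \<open>infinite B\<close>] by blast
  show ?thesis using bij_betw_trans[OF a bij_betw_inv_into[OF b]] that by blast
qed

lemma graph_iso_of_edge_counts:
  fixes G :: "('v1, 'e1::countable) graph" and H :: "('v2, 'e2::countable) graph"
  assumes wfG: "wf_graph G" and wfH: "wf_graph H" and bij: "bij_betw \<phi> (verts G) (verts H)"
    and counts: "\<And>x y. x \<in> verts G \<Longrightarrow> y \<in> verts G \<Longrightarrow>
      ecard (edges_between G x y) = ecard (edges_between H (\<phi> x) (\<phi> y))"
  shows "graph_iso G H"
proof -
  have "\<exists>b. bij_betw b (edges_between G x y) (edges_between H (\<phi> x) (\<phi> y))"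
    if "x \<in> verts G" "y \<in> verts G" for x y
    using bij_betw_of_ecard_eq[OF countableI_type countableI_type counts[OF that]] by blast
  then obtain B where B: "\<And>x y. x \<in> verts G \<Longrightarrow> y \<in> verts G \<Longrightarrow>
      bij_betw (B x y) (edges_between G x y) (edges_between H (\<phi> x) (\<phi> y))"
    by metis
  define \<psi> where "\<psi> e = B (src G e) (rng G e) e" for e
  have between_ends: "e \<in> edges_between G (src G e) (rng G e)" if "e \<in> edges G" for e
    using that unfolding edges_between_def by simp
  have "\<psi> e \<in> edges_between H (\<phi> (src G e)) (\<phi> (rng G e))" if "e \<in> edges G" for e
    using B[OF wf_graphD[OF wfG that]] between_ends[OF that] unfolding \<psi>_def bij_betw_def by blast
  then have \<psi>: "\<psi> e \<in> edges H" "src H (\<psi> e) = \<phi> (src G e)" "rng H (\<psi> e) = \<phi> (rng G e)"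
    if "e \<in> edges G" for e
    using that unfolding edges_between_def by auto
  have inj_\<phi>: "inj_on \<phi> (verts G)" using bij unfolding bij_betw_def by simp
  have "inj_on \<psi> (edges G)"
  proof (rule inj_onI)
    fix e1 e2 assume e: "e1 \<in> edges G" "e2 \<in> edges G" "\<psi> e1 = \<psi> e2"
    then have "\<phi> (src G e1) = \<phi> (src G e2)" "\<phi> (rng G e1) = \<phi> (rng G e2)"
      using \<psi> by metis+
    then have ends: "src G e1 = src G e2" "rng G e1 = rng G e2"
      using inj_onD[OF inj_\<phi>] wf_graphD[OF wfG] e by blast+
    have "inj_on (B (src G e1) (rng G e1)) (edges_between G (src G e1) (rng G e1))"
      using B[OF wf_graphD[OF wfG e(1)]] unfolding bij_betw_def by simp
    then show "e1 = e2"
      using e(3) between_ends[OF e(1)] between_ends[OF e(2)] ends unfolding \<psi>_def by (metis inj_onD)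
  qed
  moreover have "\<psi> ` edges G = edges H"
  proof (intro equalityI subsetI)
    fix e' assume e': "e' \<in> edges H"
    then obtain x y where xy: "x \<in> verts G" "y \<in> verts G" "src H e' = \<phi> x" "rng H e' = \<phi> y"
      using wf_graphD[OF wfH e'] bij unfolding bij_betw_def by (metis imageE)
    then have "e' \<in> B x y ` edges_between G x y"
      using e' B[OF xy(1,2)] unfolding bij_betw_def edges_between_def by simp
    then obtain e where "e \<in> edges_between G x y" "e' = B x y e" by blast
    then show "e' \<in> \<psi> ` edges G" unfolding edges_between_def \<psi>_def by auto
  qed (use \<psi> in auto)
  ultimately have "graph_iso_by \<phi> \<psi> G H"
    unfolding graph_iso_by_def using bij \<psi> by (simp add: bij_betw_def)
  then show ?thesis using graph_iso_iff_graph_iso_by by blast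
qed

lemma graph_of_mat_simps:
  "verts (graph_of_mat n A) = {0..<n}"
  "edges (graph_of_mat n A) = {(x, y, k). x < n \<and> y < n \<and> enat k < A x y}"
  "src (graph_of_mat n A) = (\<lambda>(x, y, k). x)"
  "rng (graph_of_mat n A) = (\<lambda>(x, y, k). y)"
  unfolding graph_of_mat_def by simp_all

lemma wf_graph_of_mat: "wf_graph (graph_of_mat n A)"
  unfolding wf_graph_def graph_of_mat_def by auto

lemma graph_of_mat_cong:
  "(\<And>i j. i < n \<Longrightarrow> j < n \<Longrightarrow> A i j = B i j) \<Longrightarrow> graph_of_mat n A = graph_of_mat n B"
  unfolding graph_of_mat_def by auto

lemma ecard_edges_between_graph_of_mat:
  assumes "x < n" "y < n"
  shows "ecard (edges_between (graph_of_mat n A) x y) = A x y"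
proof -
  have "edges_between (graph_of_mat n A) x y = (\<lambda>k. (x, y, k)) ` {k. enat k < A x y}"
    using assms unfolding edges_between_def graph_of_mat_def by auto
  then show ?thesis by (simp add: ecard_image inj_on_def ecard_less_enat)
qed

section \<open>Column operations on the matrix of a graph\<close>

definition add_column :: "(nat \<Rightarrow> nat \<Rightarrow> enat) \<Rightarrow> nat \<Rightarrow> nat \<Rightarrow> nat \<Rightarrow> nat \<Rightarrow> enat" where
  "add_column A u v x y = (if y = v then A x v - (if x = u then 1 else 0) + A x u else A x y)"

text \<open>Out-splitting \<open>u\<close> into a copy \<open>(u, 0)\<close> that keeps only one edge to \<open>v\<close> and a copy \<open>(u, 1)\<close>
  that keeps the other edges, and then contracting that edge, turns every edge into \<open>u\<close> into an
  extra edge into \<open>v\<close>; the copy \<open>(u, 1)\<close> takes the place of \<open>u\<close>.\<close>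

locale column_addition =
  fixes n :: nat and A :: "nat \<Rightarrow> nat \<Rightarrow> enat" and u v :: nat
  assumes u: "u < n" and v: "v < n" and u_ne_v: "u \<noteq> v" and edge_uv: "0 < A u v" and loop_u: "0 < A u u"
begin

abbreviation "G \<equiv> graph_of_mat n A"

definition "e_uv = (u, v, 0::nat)"
definition "part e = (if e = e_uv then 0 else 1::nat)"
definition "G_split = move_O G u 2 part"
definition "G_contracted = contract G_split (u, 0) (e_uv, 0)"
definition "vertex x = (x, if x = u then 1 else 0::nat)"

lemma e_uv: "e_uv \<in> edges G" "src G e_uv = u" "rng G e_uv = v"
  unfolding e_uv_def graph_of_mat_simps using u v edge_uv by (simp_all add: zero_enat_def)

lemma move_O_cond_G: "move_O_cond G u 2 part"
proof -
  have loop: "(u, u, 0) \<in> out_edges G u"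
    unfolding out_edges_def graph_of_mat_simps using u loop_u by (simp add: zero_enat_def)
  have uv: "e_uv \<in> out_edges G u" using e_uv unfolding out_edges_def by simp
  have "part ` out_edges G u = {0..<2}"
  proof (intro equalityI subsetI)
    fix i :: nat assume "i \<in> {0..<2}"
    then have "i = part e_uv \<or> i = part (u, u, 0)"
      unfolding part_def e_uv_def using u_ne_v by auto
    then show "i \<in> part ` out_edges G u" using loop uv by blast
  qed (auto simp: part_def)
  moreover have "finite {e \<in> out_edges G u. part e = 0}"
    by (rule finite_subset[of _ "{e_uv}"]) (auto simp: part_def split: if_splits)
  ultimately show ?thesis
    unfolding move_O_cond_def is_sink_def using u uv
    by (auto simp: graph_of_mat_simps less_2_cases_iff)
qed

lemma wf_G_split: "wf_graph G_split"
  unfolding G_split_def by (rule wf_move_O[OF wf_graph_of_mat move_O_cond_G])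

lemma edges_G_split:
  "z \<in> edges G_split \<longleftrightarrow>
    (\<exists>e i. z = (e, i) \<and> e \<in> edges G \<and> ((rng G e \<noteq> u \<and> i = 0) \<or> (rng G e = u \<and> i < 2)))"
  unfolding G_split_def move_O_def by auto

lemma src_G_split: "src G_split (e, i) = (if src G e = u then (u, part e) else (src G e, 0))"
  unfolding G_split_def move_O_def by simp

lemma rng_G_split: "rng G_split (e, i) = (if rng G e = u then (u, i) else (rng G e, 0))"
  unfolding G_split_def move_O_def by simp

lemma verts_G_split: "verts G_split = {(w, 0) | w. w \<in> verts G \<and> w \<noteq> u} \<union> {(u, i) | i. i < 2}"
  unfolding G_split_def move_O_def by simp

lemma contractible_G_split: "contractible G_split (u, 0) (e_uv, 0)"
proof -
  have "out_edges G_split (u, 0) = {(e_uv, 0)}"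
  proof (intro equalityI subsetI)
    fix z assume "z \<in> out_edges G_split (u, 0)"
    then have z: "z \<in> edges G_split" "src G_split z = (u, 0)" unfolding out_edges_def by auto
    then obtain e i where ei: "z = (e, i)" "e \<in> edges G" "(rng G e \<noteq> u \<and> i = 0) \<or> (rng G e = u \<and> i < 2)"
      unfolding edges_G_split by blast
    have "src G e = u \<and> part e = 0" using z(2) unfolding ei(1) src_G_split by (auto split: if_splits)
    then have "e = e_uv" unfolding part_def by (auto split: if_splits)
    then show "z \<in> {(e_uv, 0)}" using ei e_uv u_ne_v by auto
  next
    fix z assume "z \<in> {(e_uv, 0::nat)}"
    moreover have "(e_uv, 0::nat) \<in> edges G_split" unfolding edges_G_split using e_uv u_ne_v by auto
    moreover have "src G_split (e_uv, 0) = (u, 0)" unfolding src_G_split using e_uv by (simp add: part_def)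
    ultimately show "z \<in> out_edges G_split (u, 0)" unfolding out_edges_def by simp
  qed
  moreover have "rng G_split (e_uv, 0) \<noteq> (u, 0)" unfolding rng_G_split using e_uv u_ne_v by simp
  ultimately show ?thesis unfolding contractible_def verts_G_split by simp
qed

lemma verts_G_contracted: "verts G_contracted = vertex ` {0..<n}"
proof -
  have "verts G_contracted = verts G_split - {(u, 0)}" unfolding G_contracted_def contract_def by simp
  also have "\<dots> = vertex ` {0..<n}"
  proof (intro equalityI subsetI)
    fix z assume "z \<in> verts G_split - {(u, 0)}"
    then show "z \<in> vertex ` {0..<n}" unfolding verts_G_split graph_of_mat_simps vertex_def using u
      by (auto simp: image_iff less_2_cases_iff)
  qed (auto simp: verts_G_split graph_of_mat_simps vertex_def)
  finally show ?thesis .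
qed

lemma edges_between_G_contracted:
  "edges_between G_contracted (vertex x) (vertex y) = (\<lambda>e. (e, if y = u then 1 else 0)) `
      {e \<in> edges G. src G e = x \<and> e \<noteq> e_uv \<and> (rng G e = y \<or> (y = v \<and> rng G e = u))}"
proof -
  have src_vertex: "src G_split (e, i) = vertex x \<longleftrightarrow> src G e = x \<and> e \<noteq> e_uv" if "e \<in> edges G" for e i
    unfolding src_G_split vertex_def part_def using e_uv by auto
  have src: "src G_contracted z = src G_split z" for z
    unfolding G_contracted_def contract_def by simp
  have rng: "rng G_contracted z = (if rng G_split z = (u, 0) then rng G_split (e_uv, 0) else rng G_split z)" for z
    unfolding G_contracted_def contract_def by simp
  have edges: "edges G_contracted = edges G_split - {(e_uv, 0)}"
    unfolding G_contracted_def contract_def by simp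
  show ?thesis
  proof (intro equalityI subsetI)
    fix z assume "z \<in> edges_between G_contracted (vertex x) (vertex y)"
    then have z: "z \<in> edges G_split" "src G_split z = vertex x" "rng G_contracted z = vertex y"
      unfolding edges_between_def edges src by auto
    then obtain e i where ei: "z = (e, i)" "e \<in> edges G" "(rng G e \<noteq> u \<and> i = 0) \<or> (rng G e = u \<and> i < 2)"
      unfolding edges_G_split by blast
    have "src G e = x" "e \<noteq> e_uv" using z(2) src_vertex[OF ei(2)] unfolding ei(1) by auto
    moreover have "rng G e = y \<or> (y = v \<and> rng G e = u)" and "i = (if y = u then 1 else 0)"
      using z(3) ei(3) e_uv u_ne_v unfolding ei(1) rng rng_G_split vertex_def
      by (auto split: if_splits simp: less_2_cases_iff)
    ultimately show "z \<in> (\<lambda>e. (e, if y = u then 1 else 0)) `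
        {e \<in> edges G. src G e = x \<and> e \<noteq> e_uv \<and> (rng G e = y \<or> (y = v \<and> rng G e = u))}"
      unfolding ei(1) using ei(2) by auto
  next
    fix z assume "z \<in> (\<lambda>e. (e, if y = u then 1 else 0::nat)) `
        {e \<in> edges G. src G e = x \<and> e \<noteq> e_uv \<and> (rng G e = y \<or> (y = v \<and> rng G e = u))}"
    then obtain e where e: "z = (e, if y = u then 1 else 0)" "e \<in> edges G" "src G e = x" "e \<noteq> e_uv"
      "rng G e = y \<or> (y = v \<and> rng G e = u)" by blast
    have "z \<in> edges G_split" unfolding edges_G_split e(1) using e(2,5) u_ne_v by auto
    moreover have "src G_split z = vertex x" unfolding e(1) using src_vertex[OF e(2)] e(3,4) by simp
    moreover have "rng G_contracted z = vertex y"
      unfolding e(1) rng rng_G_split vertex_def using e(5) e_uv u_ne_v by auto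
    ultimately show "z \<in> edges_between G_contracted (vertex x) (vertex y)"
      unfolding edges_between_def edges src using e(1,4) by simp
  qed
qed

lemma ecard_edges_between_G_contracted:
  assumes x: "x < n" and y: "y < n"
  shows "ecard (edges_between G_contracted (vertex x) (vertex y)) = add_column A u v x y"
proof -
  let ?X = "{e \<in> edges G. src G e = x \<and> e \<noteq> e_uv \<and> (rng G e = y \<or> (y = v \<and> rng G e = u))}"
  have "ecard (edges_between G_contracted (vertex x) (vertex y)) = ecard ?X"
    unfolding edges_between_G_contracted by (rule ecard_image) (auto simp: inj_on_def)
  also have "\<dots> = add_column A u v x y"
  proof (cases "y = v")
    case True
    have X: "?X = (edges_between G x v - {e_uv}) \<union> edges_between G x u"
      unfolding edges_between_def True using u_ne_v e_uv by auto
    have disj: "(edges_between G x v - {e_uv}) \<inter> edges_between G x u = {}"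
      unfolding edges_between_def using u_ne_v by auto
    have "ecard (edges_between G x v - {e_uv}) = A x v - (if x = u then 1 else 0)"
    proof (cases "x = u")
      case True
      then have "e_uv \<in> edges_between G x v" unfolding edges_between_def using e_uv by simp
      then have "ecard (edges_between G x v - {e_uv}) = ecard (edges_between G x v) - 1"
        by (rule ecard_Diff_singleton)
      then show ?thesis using True ecard_edges_between_graph_of_mat[OF x v, of A] by simp
    next
      case False
      then have "e_uv \<notin> edges_between G x v" unfolding edges_between_def using e_uv by auto
      then show ?thesis using False ecard_edges_between_graph_of_mat[OF x v, of A] by simp
    qed
    then show ?thesis
      unfolding X ecard_Un_disjoint[OF disj] add_column_def
      using True ecard_edges_between_graph_of_mat[OF x u, of A] by simp
  next
    case False
    have "?X = edges_between G x y" unfolding edges_between_def using False e_uv by auto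
    then show ?thesis unfolding add_column_def using False ecard_edges_between_graph_of_mat[OF x y, of A] by simp
  qed
  finally show ?thesis .
qed

lemma move_equiv_add_column: "move_equiv G (graph_of_mat n (add_column A u v))"
proof -
  have G_split: "move_equiv G G_split"
    unfolding G_split_def by (rule move_equiv_move_O[OF wf_graph_of_mat move_O_cond_G])
  have "move_equiv G_split G_contracted"
    unfolding G_contracted_def by (rule move_equiv_contract[OF wf_G_split contractible_G_split])
  then have "move_equiv G G_contracted"
    by (rule move_equiv_trans[OF G_split _ wf_G_split contractibleD(4)[OF contractible_G_split wf_G_split]])
  moreover have wf_G_contracted: "wf_graph G_contracted"
    unfolding G_contracted_def by (rule wf_contract[OF wf_G_split contractible_G_split])
  moreover have "graph_iso G_contracted (graph_of_mat n (add_column A u v))"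
  proof (rule graph_iso_of_edge_counts)
    show "wf_graph G_contracted" by (rule wf_G_contracted)
    show "bij_betw fst (verts G_contracted) (verts (graph_of_mat n (add_column A u v)))"
      unfolding verts_G_contracted graph_of_mat_simps bij_betw_def vertex_def
      by (auto simp: inj_on_def image_iff)
    fix a b assume "a \<in> verts G_contracted" "b \<in> verts G_contracted"
    then obtain x y where "a = vertex x" "b = vertex y" "x < n" "y < n"
      unfolding verts_G_contracted by auto
    then show "ecard (edges_between G_contracted a b) =
        ecard (edges_between (graph_of_mat n (add_column A u v)) (fst a) (fst b))"
      using ecard_edges_between_G_contracted ecard_edges_between_graph_of_mat
      by (simp add: vertex_def)
  qed (rule wf_graph_of_mat)
  ultimately show ?thesis by (metis graph_iso_sym move_equiv_graph_iso_trans)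
qed

end

lemma move_equiv_add_column:
  assumes "u < n" "v < n" "u \<noteq> v" "0 < A u v" "0 < A u u"
  shows "move_equiv (graph_of_mat n A) (graph_of_mat n (add_column A u v))"
proof -
  interpret column_addition n A u v using assms by unfold_locales
  show ?thesis by (rule move_equiv_add_column)
qed

section \<open>Rank-one matrices\<close>

lemma rank_real_mat_of_zero:
  assumes "\<forall>i<n. \<forall>j<n. C i j = 0"
  shows "vec_space.rank n (real_mat_of n C) = 0"
proof -
  interpret vs: vec_space "TYPE(real)" n .
  have "real_mat_of n C = 0\<^sub>m n n" unfolding real_mat_of_def using assms by (auto intro!: eq_matI)
  then show ?thesis using vs.rank_0I by simp
qed

text \<open>Otherwise column 0 and column \<open>j\<close> would be linearly independent.\<close>

lemma rank_one_rows_eq: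
  fixes C :: "nat \<Rightarrow> nat \<Rightarrow> nat"
  assumes rank: "vec_space.rank n (real_mat_of n C) = 1"
    and i0: "i0 < n" and i: "i < n" and j: "j < n"
    and same: "C i0 0 = C i 0" and nonzero: "C i0 0 \<noteq> 0"
  shows "C i0 j = C i j"
proof (rule ccontr)
  assume ne: "C i0 j \<noteq> C i j"
  interpret vs: vec_space "TYPE(real)" n .
  define M where "M = real_mat_of n C"
  have M: "M \<in> carrier_mat n n" unfolding M_def real_mat_of_def by simp
  have n: "0 < n" using i0 by simp
  have entry: "col M k $ r = real (C r k)" if "r < n" "k < n" for r k
    using that unfolding M_def real_mat_of_def by simp
  define c0 where "c0 = col M 0"
  define cj where "cj = col M j"
  have "c0 $ i0 \<noteq> cj $ i0 \<or> c0 $ i \<noteq> cj $ i"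
    using ne same unfolding c0_def cj_def by (simp add: entry i0 i j n)
  then have c0_ne_cj: "c0 \<noteq> cj" by auto
  have carrier: "c0 \<in> carrier_vec n" "cj \<in> carrier_vec n" unfolding c0_def cj_def using M by auto
  have "c0 \<in> set (cols M)" "cj \<in> set (cols M)"
    unfolding c0_def cj_def using M n j by (metis carrier_matD(2) cols_length cols_nth nth_mem)+
  then have cols: "{c0, cj} \<subseteq> set (cols M)" by simp
  have "vs.lin_indpt {c0, cj}"
  proof (rule vs.finite_lin_indpt2)
    fix a assume zero: "vs.lincomb a {c0, cj} = 0\<^sub>v n"
    have comb: "a c0 * c0 $ r + a cj * cj $ r = 0" if "r < n" for r
    proof -
      have "vs.lincomb a {c0, cj} $ r = 0" using zero that by simp
      then show ?thesis using vs.lincomb_index[OF that, of "{c0, cj}" a] carrier c0_ne_cj by simp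
    qed
    have "a c0 * real (C i0 0) + a cj * real (C i0 j) = 0" "a c0 * real (C i 0) + a cj * real (C i j) = 0"
      using comb[OF i0] comb[OF i] unfolding c0_def cj_def by (simp_all add: entry i0 i j n)
    then have "a cj * real (C i0 j) = a cj * real (C i j)"
      unfolding same by linarith
    then have "a cj * (real (C i0 j) - real (C i j)) = 0"
      by (simp add: right_diff_distrib)
    then have "a cj = 0" using ne by simp
    moreover from this have "a c0 = 0"
      using comb[OF i0] nonzero unfolding c0_def cj_def by (simp add: entry i0 n)
    ultimately show "\<forall>v \<in> {c0, cj}. a v = 0" by simp
  qed (use carrier in auto)
  then have "card {c0, cj} \<le> vec_space.rank n M" by (rule vs.rank_ge_card_indpt[OF M cols])
  then show False using c0_ne_cj rank unfolding M_def by simp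
qed

section \<open>Equalizing the columns\<close>

definition J_plus_rows :: "nat \<Rightarrow> (nat \<Rightarrow> nat) \<Rightarrow> nat \<Rightarrow> nat \<Rightarrow> enat" where
  "J_plus_rows m c i j = (if i < m then enat (c j + (if i = j then 1 else 0)) else \<infinity>)"

lemma add_column_J_plus_rows:
  assumes m: "1 \<le> m" and c0: "c 0 = d" and j: "0 < j" and cj: "1 \<le> c j"
  shows "add_column (J_plus_rows m c) 0 j x y = J_plus_rows m (c(j := c j + d)) x y"
proof (cases "y = j \<and> x < m")
  case True
  show ?thesis
  proof (cases "x = 0")
    case True
    have "enat (c j) - 1 + enat (d + 1) = enat (c j + d)" using cj by (simp add: one_enat_def)
    then show ?thesis using True \<open>y = j \<and> x < m\<close> j c0 unfolding add_column_def J_plus_rows_def by simp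
  next
    case False
    then show ?thesis using True c0 unfolding add_column_def J_plus_rows_def by (simp add: zero_enat_def)
  qed
next
  case False
  then show ?thesis using m j unfolding add_column_def J_plus_rows_def by auto
qed

lemma move_equiv_J_plus_rows_add:
  assumes "1 \<le> m" "m \<le> n" "c 0 = d" "0 < j" "j < n" "1 \<le> c j"
  shows "move_equiv (graph_of_mat n (J_plus_rows m c)) (graph_of_mat n (J_plus_rows m (c(j := c j + d))))"
proof -
  have "move_equiv (graph_of_mat n (J_plus_rows m c)) (graph_of_mat n (add_column (J_plus_rows m c) 0 j))"
    using assms by (intro move_equiv_add_column) (auto simp: J_plus_rows_def zero_enat_def)
  moreover have "add_column (J_plus_rows m c) 0 j = J_plus_rows m (c(j := c j + d))"
    using add_column_J_plus_rows[OF assms(1,3,4,6)] by (intro ext)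
  ultimately show ?thesis by simp
qed

lemma edge_graph_of_J_plus_rows: "1 \<le> m \<Longrightarrow> m \<le> n \<Longrightarrow> (0, 0, 0) \<in> edges (graph_of_mat n (J_plus_rows m c))"
  unfolding graph_of_mat_simps J_plus_rows_def by (simp add: zero_enat_def)

lemma move_equiv_J_plus_rows_const:
  assumes m: "1 \<le> m" "m \<le> n" and d: "0 < d"
  shows "c 0 = d \<Longrightarrow> \<forall>j<n. d dvd c j \<and> 0 < c j \<Longrightarrow>
    move_equiv (graph_of_mat n (J_plus_rows m c)) (graph_of_mat n (J_plus_rows m (\<lambda>_. d)))"
proof (induction "\<Sum>j<n. c j" arbitrary: c rule: less_induct)
  case less
  show ?case
  proof (cases "\<forall>j<n. c j = d")
    case True
    then have "graph_of_mat n (J_plus_rows m c) = graph_of_mat n (J_plus_rows m (\<lambda>_. d))"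
      by (intro graph_of_mat_cong) (simp add: J_plus_rows_def)
    then show ?thesis using move_equiv_refl by metis
  next
    case False
    then obtain j where j: "j < n" "c j \<noteq> d" by blast
    then have "0 < j" using less.prems(1) by (cases j) auto
    from j less.prems(2) obtain k where k: "c j = d * k" "k \<noteq> 0" by (metis dvdE mult_0_right not_less_zero)
    with j have "2 \<le> k" by (cases k) auto
    then have large: "d + d \<le> c j" using k(1) by (metis mult_2_right mult_le_mono2)
    define c' where "c' = c(j := c j - d)"
    have "c' j = d * (k - 1)" unfolding c'_def using k(1) by (simp add: diff_mult_distrib2)
    then have c': "c' 0 = d" "\<forall>i<n. d dvd c' i \<and> 0 < c' i"
      using less.prems \<open>0 < j\<close> \<open>2 \<le> k\<close> d unfolding c'_def by auto
    have "(\<Sum>i<n. c' i) < (\<Sum>i<n. c i)"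
      by (rule sum_strict_mono_ex1) (use j large d in \<open>auto simp: c'_def\<close>)
    then have IH: "move_equiv (graph_of_mat n (J_plus_rows m c')) (graph_of_mat n (J_plus_rows m (\<lambda>_. d)))"
      using c' by (rule less.hyps)
    have "move_equiv (graph_of_mat n (J_plus_rows m c')) (graph_of_mat n (J_plus_rows m (c'(j := c' j + d))))"
      by (rule move_equiv_J_plus_rows_add) (use m c' \<open>0 < j\<close> j(1) in auto)
    moreover have "c'(j := c' j + d) = c" unfolding c'_def using large by auto
    ultimately have "move_equiv (graph_of_mat n (J_plus_rows m c')) (graph_of_mat n (J_plus_rows m c))"
      by simp
    then show ?thesis
      by (rule move_equiv_trans[OF move_equiv_sym IH wf_graph_of_mat edge_graph_of_J_plus_rows[OF m]])
  qed
qed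

lemma graph_of_J_plus_eq_J_plus_rows:
  assumes "\<And>i j. i < m \<Longrightarrow> j < n \<Longrightarrow> C i j = c j"
  shows "graph_of_mat n (mat_plus (J_mat n m) C) = graph_of_mat n (J_plus_rows m c)"
  using assms unfolding mat_plus_def J_mat_def J_plus_rows_def
  by (intro graph_of_mat_cong) (simp add: one_enat_def zero_enat_def)

theorem lemma8p4:
  fixes C :: "nat \<Rightarrow> nat \<Rightarrow> nat" and n m d :: nat
  assumes "m \<le> n"
    and "\<forall>i<m. \<forall>j<n. C i j \<noteq> 0"
    and "\<forall>i. m \<le> i \<and> i < n \<longrightarrow> (\<forall>j<n. C i j = 0)"
    and "d = Gcd {C i j | i j. i < n \<and> j < n \<and> C i j \<noteq> 0}"
    and "\<forall>i<n. C i 0 = (if i < m then d else 0)"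
    and "vec_space.rank n (real_mat_of n C) = 1"
  shows "mat_move_equiv n (mat_plus (J_mat n m) C) (mat_plus (J_mat n m) (D_mat n m d))"
proof -
  have m: "1 \<le> m"
  proof (rule ccontr)
    assume "\<not> 1 \<le> m"
    then have "\<forall>i<n. \<forall>j<n. C i j = 0" using assms(3) by simp
    then show False using rank_real_mat_of_zero assms(6) by simp
  qed
  then have n: "0 < n" and C00: "C 0 0 = d" using assms(1,5) by auto
  then have d: "0 < d" using assms(2) m by auto
  have rows: "C i j = C 0 j" if i: "i < m" and j: "j < n" for i j
  proof -
    have "C 0 j = C i j"
      by (rule rank_one_rows_eq[OF assms(6) n _ j]) (use i assms(1,5) C00 d in auto)
    then show ?thesis by simp
  qed
  have "d dvd C 0 j \<and> 0 < C 0 j" if j: "j < n" for j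
  proof -
    have "C 0 j \<noteq> 0" using assms(2) m j by simp
    then have "C 0 j \<in> {C i j | i j. i < n \<and> j < n \<and> C i j \<noteq> 0}" using n j by blast
    then have "d dvd C 0 j" unfolding assms(4) by (rule Gcd_dvd)
    then show ?thesis using \<open>C 0 j \<noteq> 0\<close> by simp
  qed
  then have "move_equiv (graph_of_mat n (J_plus_rows m (C 0))) (graph_of_mat n (J_plus_rows m (\<lambda>_. d)))"
    using move_equiv_J_plus_rows_const[of m n d "C 0"] m assms(1) d C00 by blast
  moreover have "graph_of_mat n (mat_plus (J_mat n m) C) = graph_of_mat n (J_plus_rows m (C 0))"
    by (rule graph_of_J_plus_eq_J_plus_rows) (rule rows)
  moreover have "graph_of_mat n (mat_plus (J_mat n m) (D_mat n m d)) = graph_of_mat n (J_plus_rows m (\<lambda>_. d))"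
    by (rule graph_of_J_plus_eq_J_plus_rows) (simp add: D_mat_def)
  ultimately show ?thesis unfolding mat_move_equiv_def by simp
qed

end
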